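(* Let $K\ge 2$, let $\Theta=\{(\theta_1,\ldots,\theta_K):\sum_{k=1}^K\theta_k=1,\ \theta_k\ge 0\}$ be the $(K-1)$-simplex, and let $X_1,\ldots,X_n\in\{1,\ldots,K\}$ be an observed sample from $\mathrm{Multinomial}(1,\theta_1,\ldots,\theta_K)$ (i.e. i.i.d. with $\Pr(X_i=k\mid\theta)=\theta_k$). Consider the random set $$\mathbf e_X(U)=\{\theta\in\Theta:\ \theta_{X_i}>U_i,\ i=1,\ldots,n\},$$ where $U=(U_1,\ldots,U_n)$ has the law of $n$ i.i.d. $\mathrm{Unif}(0,1)$ variables conditioned on the event $\mathbf e_X(U)\neq\emptyset$. Then this random set is distributed as $$\mathbf e_N(Z)=\{\theta\in\Theta:\ \theta_1\ge Z_1,\ldots,\theta_K\ge Z_K\},$$ where $(Z_0,Z_1,\ldots,Z_K)\sim\mathrm{Dirichlet}(1,N_1,\ldots,N_K)$ and $N_k=\#\{i: X_i=k\}$ are the cell counts, $k=1,\ldots,K$. Here $Z_k=0$ with probability one if and only if $N_k=0$.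
   Context: The Dirichlet distribution with some parameters equal to zero is understood in the degenerate sense: a coordinate whose parameter is $0$ equals $0$ almost surely, and the remaining coordinates follow the Dirichlet distribution with the positive parameters. *)

theory Defs
  imports "HOL-Probability.Probability"
begin

definition param_simplex :: "nat \<Rightarrow> (nat \<Rightarrow> real) set" where
  "param_simplex K = {\<theta>. (\<forall>k. k \<notin> {1..K} \<longrightarrow> \<theta> k = 0) \<and> (\<forall>k\<in>{1..K}. \<theta> k \<ge> 0)
                    \<and> (\<Sum>k\<in>{1..K}. \<theta> k) = 1}"

definition cell_count :: "nat \<Rightarrow> (nat \<Rightarrow> nat) \<Rightarrow> nat \<Rightarrow> nat" where
  "cell_count n X k = card {i\<in>{1..n}. X i = k}"

definition eX :: "nat \<Rightarrow> nat \<Rightarrow> (nat \<Rightarrow> nat) \<Rightarrow> (nat \<Rightarrow> real) \<Rightarrow> (nat \<Rightarrow> real) set" where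
  "eX K n X u = {\<theta>\<in>param_simplex K. \<forall>i\<in>{1..n}. \<theta> (X i) > u i}"

definition eN :: "nat \<Rightarrow> (nat \<Rightarrow> real) \<Rightarrow> (nat \<Rightarrow> real) set" where
  "eN K z = {\<theta>\<in>param_simplex K. \<forall>k\<in>{1..K}. \<theta> k \<ge> z k}"

definition unif_cube :: "nat \<Rightarrow> (nat \<Rightarrow> real) measure" where
  "unif_cube n = PiM {1..n} (\<lambda>_. uniform_measure lborel {0..1})"

definition gamma_density :: "real \<Rightarrow> real \<Rightarrow> real" where
  "gamma_density a x = (if x > 0 then x powr (a - 1) * exp (- x) / Gamma a else 0)"

text \<open>Dirichlet distribution with parameters alpha_j (j in I, alpha_j >= 0), in the degenerate
  sense for zero parameters: constructed as normalised independent Gamma(alpha_j) variables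
  over the positive parameters; coordinates with alpha_j = 0 are identically 0.\<close>
definition dirichlet :: "nat set \<Rightarrow> (nat \<Rightarrow> real) \<Rightarrow> (nat \<Rightarrow> real) measure" where
  "dirichlet I \<alpha> =
     distr (PiM {j\<in>I. \<alpha> j > 0} (\<lambda>j. density lborel (gamma_density (\<alpha> j))))
           (PiM I (\<lambda>_. borel))
           (\<lambda>g. \<lambda>j\<in>I. if \<alpha> j > 0 then g j / (\<Sum>i\<in>{j\<in>I. \<alpha> j > 0}. g i) else 0)"

text \<open>Effros sigma-algebra on sets of parameter vectors (the standard measurable structure
  for random (closed) sets): generated by the hitting events {S. S meets G}, G open.\<close>
definition effros :: "(nat \<Rightarrow> real) set measure" where
  "effros = sigma UNIV {{S. S \<inter> G \<noteq> {}} | G. open G}"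

end

theory Submission
  imports Defs
begin

(*
  The set e_X(U) depends on U only through the cell maxima M_k = max {U_i | X_i = k}, k in
  P = {k | N_k > 0}: it is the set of theta in the simplex with theta_k > M_k for k in P, and it is
  nonempty iff sum_P M_k < 1. The M_k are independent with Beta(N_k, 1) densities
  N_k w^(N_k - 1) on (0, 1], so conditioning on nonemptiness leaves a density proportional to
  prod_P w_k^(N_k - 1) on the open simplex {w > 0, sum_P w_k < 1}. Writing the Dirichlet vector
  as independent Gamma(1) and Gamma(N_k) variables divided by their sum, and integrating out the
  sum, shows that (Z_k)_{k in P} has exactly this law. Finally, almost surely sum_{k<=K} Z_k < 1
  and Z_k = 0 outside P; then e_N(Z) and {theta | theta_k > Z_k for k in P} meet the same open
  sets, so no Effros-measurable event separates them.
*)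

section \<open>The Effros \<sigma>-algebra\<close>

lemma sets_effros: "sets effros = sigma_sets UNIV {{S. S \<inter> G \<noteq> {}} | G. open G}"
  unfolding effros_def by (rule sets_measure_of) auto

lemma measurable_effrosI:
  assumes "\<And>G. open G \<Longrightarrow> {x \<in> space M. f x \<inter> G \<noteq> {}} \<in> sets M"
  shows "f \<in> measurable M effros"
  unfolding effros_def
proof (rule measurable_measure_of)
  fix A assume "A \<in> {{S. S \<inter> G \<noteq> {}} | G :: (nat \<Rightarrow> real) set. open G}"
  then obtain G where "open G" "A = {S. S \<inter> G \<noteq> {}}" by auto
  moreover have "f -` {S. S \<inter> G \<noteq> {}} \<inter> space M = {x \<in> space M. f x \<inter> G \<noteq> {}}" by auto
  ultimately show "f -` A \<inter> space M \<in> sets M" using assms by simp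
qed auto

lemma sets_effros_hitting_invariant:
  assumes "\<And>G. open G \<Longrightarrow> S \<inter> G \<noteq> {} \<longleftrightarrow> T \<inter> G \<noteq> {}" and "A \<in> sets effros"
  shows "S \<in> A \<longleftrightarrow> T \<in> A"
  using assms(2) unfolding sets_effros
proof induction
  case (Basic a)
  then show ?case using assms(1) by auto
qed auto

lemma distr_effros_AE_cong:
  assumes f: "f \<in> measurable M effros" and g: "g \<in> measurable M effros"
    and hit: "AE x in M. \<forall>G. open G \<longrightarrow> (f x \<inter> G \<noteq> {} \<longleftrightarrow> g x \<inter> G \<noteq> {})"
  shows "distr M effros f = distr M effros g"
proof (rule measure_eqI)
  fix A assume "A \<in> sets (distr M effros f)"
  then have A: "A \<in> sets effros" by simp
  have "AE x in M. x \<in> f -` A \<inter> space M \<longleftrightarrow> x \<in> g -` A \<inter> space M"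
    using hit
  proof eventually_elim
    case (elim x)
    have "f x \<in> A \<longleftrightarrow> g x \<in> A"
      by (rule sets_effros_hitting_invariant[OF _ A]) (use elim in blast)
    then show ?case by simp
  qed
  from emeasure_eq_AE[OF this measurable_sets[OF f A] measurable_sets[OF g A]]
  show "emeasure (distr M effros f) A = emeasure (distr M effros g) A"
    by (simp add: emeasure_distr[OF f A] emeasure_distr[OF g A])
qed simp

lemma sets_PiM_strictly_below_some:
  fixes T :: "('i \<Rightarrow> real) set"
  assumes J: "finite J" "J \<subseteq> I"
  shows "{w \<in> space (PiM I (\<lambda>_. borel)). \<exists>\<theta>\<in>T. \<forall>k\<in>J. w k < \<theta> k} \<in> sets (PiM I (\<lambda>_. borel))"
proof -
  let ?below = "\<lambda>q. {w \<in> space (PiM I (\<lambda>_. borel)). \<forall>k\<in>J. w k < q k}"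
  \<comment> \<open>a rational point strictly between w and \<theta> makes the union countable\<close>
  define Q where "Q = {q \<in> PiE J (\<lambda>_. \<rat>). \<exists>\<theta>\<in>T. \<forall>k\<in>J. q k \<le> \<theta> k}"
  have "countable Q"
    unfolding Q_def by (rule countable_subset[OF _ countable_PiE[OF J(1) countable_rat]]) auto
  have eq: "{w \<in> space (PiM I (\<lambda>_. borel)). \<exists>\<theta>\<in>T. \<forall>k\<in>J. w k < \<theta> k} = (\<Union>q\<in>Q. ?below q)"
  proof (intro equalityI subsetI)
    fix w assume "w \<in> {w \<in> space (PiM I (\<lambda>_. borel)). \<exists>\<theta>\<in>T. \<forall>k\<in>J. w k < \<theta> k}"
    then obtain \<theta> where w: "w \<in> space (PiM I (\<lambda>_. borel))" "\<theta> \<in> T" "\<forall>k\<in>J. w k < \<theta> k" by auto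
    then have "\<forall>k\<in>J. \<exists>r\<in>\<rat>. w k < r \<and> r < \<theta> k"
      using Rats_dense_in_real by blast
    then obtain q where q: "q \<in> PiE J (\<lambda>_. \<rat>)" "\<forall>k\<in>J. w k < q k \<and> q k < \<theta> k"
      using PiE_choice[of J "\<lambda>_. \<rat>" "\<lambda>k r. w k < r \<and> r < \<theta> k"] by blast
    then have "q \<in> Q"
      unfolding Q_def using w(2) by (auto intro: less_imp_le)
    with q w show "w \<in> (\<Union>q\<in>Q. ?below q)" by auto
  next
    fix w assume "w \<in> (\<Union>q\<in>Q. ?below q)"
    then obtain q \<theta> where "w \<in> space (PiM I (\<lambda>_. borel))" "\<forall>k\<in>J. w k < q k"
      "\<theta> \<in> T" "\<forall>k\<in>J. q k \<le> \<theta> k"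
      unfolding Q_def by auto
    then show "w \<in> {w \<in> space (PiM I (\<lambda>_. borel)). \<exists>\<theta>\<in>T. \<forall>k\<in>J. w k < \<theta> k}"
      by (auto intro: order.strict_trans2)
  qed
  have "Measurable.pred (PiM I (\<lambda>_. borel)) (\<lambda>w. \<forall>k\<in>J. w k < q k)" for q :: "'i \<Rightarrow> real"
    using J by (intro pred_intros_finite) (auto intro!: measurable_component_singleton)
  then show ?thesis
    unfolding eq by (intro sets.countable_UN''[OF \<open>countable Q\<close>]) (simp add: pred_def)
qed

section \<open>Geometry of the parameter simplex\<close>

lemma param_simplex_nonneg: "\<theta> \<in> param_simplex K \<Longrightarrow> 0 \<le> \<theta> k"
  unfolding param_simplex_def by (cases "k \<in> {1..K}") auto

lemma param_simplex_outside: "\<theta> \<in> param_simplex K \<Longrightarrow> k \<notin> {1..K} \<Longrightarrow> \<theta> k = 0"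
  unfolding param_simplex_def by auto

lemma param_simplex_sum: "\<theta> \<in> param_simplex K \<Longrightarrow> (\<Sum>k\<in>{1..K}. \<theta> k) = 1"
  unfolding param_simplex_def by auto

lemma param_simplex_segment:
  assumes "\<theta> \<in> param_simplex K" "c \<in> param_simplex K" "0 \<le> t" "t \<le> 1"
  shows "(\<lambda>k. (1 - t) * \<theta> k + t * c k) \<in> param_simplex K"
  using assms param_simplex_nonneg[OF assms(1)] param_simplex_nonneg[OF assms(2)]
  unfolding param_simplex_def by (simp add: sum.distrib flip: sum_distrib_left)

lemma exists_param_simplex_above:
  assumes K: "K \<ge> 1" and w: "\<forall>k\<in>{1..K}. 0 \<le> w k" "(\<Sum>k\<in>{1..K}. w k) < 1"
  shows "\<exists>\<theta>\<in>param_simplex K. \<forall>k\<in>{1..K}. w k < \<theta> k"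
proof -
  define \<theta> where "\<theta> k = (if k \<in> {1..K} then w k + (1 - (\<Sum>k\<in>{1..K}. w k)) / K else 0)" for k
  have "(1 - (\<Sum>k\<in>{1..K}. w k)) / K > 0" using w K by simp
  moreover have "(\<Sum>k\<in>{1..K}. \<theta> k) = 1" using K by (simp add: \<theta>_def sum.distrib)
  ultimately have "\<theta> \<in> param_simplex K" "\<forall>k\<in>{1..K}. w k < \<theta> k"
    using w unfolding param_simplex_def \<theta>_def by auto
  then show ?thesis by blast
qed

definition simplex_above :: "nat \<Rightarrow> nat set \<Rightarrow> (nat \<Rightarrow> real) \<Rightarrow> (nat \<Rightarrow> real) set" where
  "simplex_above K P w = {\<theta> \<in> param_simplex K. \<forall>k\<in>P. w k < \<theta> k}"

lemma measurable_simplex_above: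
  assumes "finite P"
  shows "simplex_above K P \<in> measurable (PiM P (\<lambda>_. borel)) effros"
proof (rule measurable_effrosI)
  fix G :: "(nat \<Rightarrow> real) set"
  have "{w \<in> space (PiM P (\<lambda>_. borel)). simplex_above K P w \<inter> G \<noteq> {}}
      = {w \<in> space (PiM P (\<lambda>_. borel)). \<exists>\<theta>\<in>param_simplex K \<inter> G. \<forall>k\<in>P. w k < \<theta> k}"
    unfolding simplex_above_def by blast
  then show "{w \<in> space (PiM P (\<lambda>_. borel)). simplex_above K P w \<inter> G \<noteq> {}} \<in> sets (PiM P (\<lambda>_. borel))"
    using sets_PiM_strictly_below_some[OF assms order_refl] by simp
qed

lemma simplex_above_nonempty_iff:
  assumes K: "K \<ge> 1" and P: "P \<subseteq> {1..K}" and w: "\<forall>k\<in>P. 0 \<le> w k"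
  shows "simplex_above K P w \<noteq> {} \<longleftrightarrow> sum w P < 1"
proof
  assume "simplex_above K P w \<noteq> {}"
  then obtain \<theta> where \<theta>: "\<theta> \<in> param_simplex K" "\<forall>k\<in>P. w k < \<theta> k"
    unfolding simplex_above_def by blast
  show "sum w P < 1"
  proof (cases "P = {}")
    case False
    have "sum w P < sum \<theta> P"
      using \<theta>(2) False finite_subset[OF P] by (intro sum_strict_mono) auto
    also have "\<dots> \<le> sum \<theta> {1..K}"
      using P by (intro sum_mono2) (auto simp: param_simplex_nonneg[OF \<theta>(1)])
    finally show ?thesis using param_simplex_sum[OF \<theta>(1)] by simp
  qed simp
next
  assume "sum w P < 1"
  define w' where "w' k = (if k \<in> P then w k else 0)" for k
  have "(\<Sum>k\<in>{1..K}. w' k) = sum w P"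
    using P unfolding w'_def by (simp add: sum.If_cases Int_absorb1)
  then have "\<exists>\<theta>\<in>param_simplex K. \<forall>k\<in>{1..K}. w' k < \<theta> k"
    using w \<open>sum w P < 1\<close> by (intro exists_param_simplex_above[OF K]) (simp_all add: w'_def)
  then obtain \<theta> where "\<theta> \<in> param_simplex K" "\<forall>k\<in>{1..K}. w' k < \<theta> k" by blast
  moreover have "w k < \<theta> k" if "k \<in> P" for k
  proof -
    have "k \<in> {1..K}" using P that by blast
    from bspec[OF \<open>\<forall>k\<in>{1..K}. w' k < \<theta> k\<close> this] that show ?thesis by (simp add: w'_def)
  qed
  ultimately have "\<theta> \<in> simplex_above K P w"
    unfolding simplex_above_def by blast
  then show "simplex_above K P w \<noteq> {}" by blast
qed

lemma eN_hits_iff_strictly_above: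
  assumes K: "K \<ge> 1" and G: "open G" and z: "(\<Sum>k\<in>{1..K}. max (z k) 0) < 1"
  shows "eN K z \<inter> G \<noteq> {} \<longleftrightarrow> (\<exists>\<theta>\<in>param_simplex K \<inter> G. \<forall>k\<in>{1..K}. z k < \<theta> k)"
proof
  assume "eN K z \<inter> G \<noteq> {}"
  then obtain \<theta> where \<theta>: "\<theta> \<in> param_simplex K" "\<theta> \<in> G" "\<forall>k\<in>{1..K}. z k \<le> \<theta> k"
    unfolding eN_def by blast
  obtain c where c: "c \<in> param_simplex K" "\<forall>k\<in>{1..K}. max (z k) 0 < c k"
    using exists_param_simplex_above[OF K, of "\<lambda>k. max (z k) 0"] z by auto
  \<comment> \<open>a small step from \<theta> towards a point strictly above z stays in G and lands strictly above z\<close>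
  define p where "p t = (\<lambda>k. (1 - t) * \<theta> k + t * c k)" for t :: real
  have "continuous_on UNIV p" unfolding p_def by (intro continuous_intros)
  then have "open (p -` G)" using G by (rule open_vimage[rotated])
  moreover have "0 \<in> p -` G" using \<theta>(2) by (simp add: p_def)
  ultimately obtain e where e: "e > 0" "ball 0 e \<subseteq> p -` G" by (rule openE)
  define t where "t = min (e / 2) 1"
  have t: "0 < t" "t \<le> 1" "t \<in> ball 0 e" using e(1) by (simp_all add: t_def)
  then have "t \<in> p -` G" using e(2) by blast
  then have "p t \<in> param_simplex K \<inter> G"
    using param_simplex_segment[OF \<theta>(1) c(1)] t by (simp add: p_def)
  moreover have "z k < p t k" if k: "k \<in> {1..K}" for k
  proof -
    have "(1 - t) * z k \<le> (1 - t) * \<theta> k" using \<theta>(3) k t by (intro mult_left_mono) auto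
    moreover have "t * z k < t * c k" using c(2) k t by simp
    ultimately show ?thesis by (simp add: p_def algebra_simps)
  qed
  ultimately show "\<exists>\<theta>\<in>param_simplex K \<inter> G. \<forall>k\<in>{1..K}. z k < \<theta> k" by blast
next
  assume "\<exists>\<theta>\<in>param_simplex K \<inter> G. \<forall>k\<in>{1..K}. z k < \<theta> k"
  then obtain \<theta> where "\<theta> \<in> param_simplex K" "\<theta> \<in> G" "\<forall>k\<in>{1..K}. z k \<le> \<theta> k"
    by (auto intro: less_imp_le)
  then show "eN K z \<inter> G \<noteq> {}" unfolding eN_def by blast
qed

lemma eN_eq_empty:
  assumes "(\<Sum>k\<in>{1..K}. max (z k) 0) > 1"
  shows "eN K z = {}"
proof (rule ccontr)
  assume "eN K z \<noteq> {}"
  then obtain \<theta> where \<theta>: "\<theta> \<in> param_simplex K" "\<forall>k\<in>{1..K}. z k \<le> \<theta> k"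
    unfolding eN_def by blast
  have "(\<Sum>k\<in>{1..K}. max (z k) 0) \<le> (\<Sum>k\<in>{1..K}. \<theta> k)"
    using \<theta> param_simplex_nonneg[OF \<theta>(1)] by (intro sum_mono) auto
  then show False using param_simplex_sum[OF \<theta>(1)] assms by simp
qed

lemma eN_eq_singleton:
  assumes sum_eq: "(\<Sum>k\<in>{1..K}. max (z k) 0) = 1"
  shows "eN K z = {\<lambda>k. if k \<in> {1..K} then max (z k) 0 else 0}"
proof -
  let ?z = "\<lambda>k. if k \<in> {1..K} then max (z k) 0 else 0"
  have "\<theta> = ?z" if "\<theta> \<in> eN K z" for \<theta>
  proof
    fix k
    have \<theta>: "\<theta> \<in> param_simplex K" "\<forall>k\<in>{1..K}. max (z k) 0 \<le> \<theta> k"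
      using that param_simplex_nonneg[of \<theta> K] unfolding eN_def by auto
    have "(\<Sum>k\<in>{1..K}. \<theta> k - max (z k) 0) = 0"
      using param_simplex_sum[OF \<theta>(1)] sum_eq by (simp add: sum_subtractf)
    then have "\<forall>k\<in>{1..K}. \<theta> k = max (z k) 0"
      using \<theta>(2) by (subst (asm) sum_nonneg_eq_0_iff) auto
    then show "\<theta> k = ?z k" using param_simplex_outside[OF \<theta>(1)] by auto
  qed
  moreover have "?z \<in> eN K z"
    unfolding eN_def param_simplex_def using sum_eq by auto
  ultimately show ?thesis by blast
qed

lemma measurable_eN:
  assumes K: "K \<ge> 1" and I: "finite I" "{1..K} \<subseteq> I"
  shows "eN K \<in> measurable (PiM I (\<lambda>_. borel)) effros"
proof (rule measurable_effrosI)
  fix G :: "(nat \<Rightarrow> real) set" assume G: "open G"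
  let ?M = "PiM I (\<lambda>_. borel :: real measure)"
  define \<sigma> where "\<sigma> z = (\<Sum>k\<in>{1..K}. max (z k) 0)" for z :: "nat \<Rightarrow> real"
  define z_pos where "z_pos z = (\<lambda>k. if k \<in> {1..K} then max (z k) 0 else 0)" for z :: "nat \<Rightarrow> real"
  have \<sigma>_meas: "\<sigma> \<in> borel_measurable ?M"
    unfolding \<sigma>_def using I
    by (intro borel_measurable_sum borel_measurable_max measurable_component_singleton) auto
  have z_pos_meas: "z_pos \<in> borel_measurable ?M"
    unfolding z_pos_def
  proof (rule measurable_coordinatewise_then_product)
    fix k
    show "(\<lambda>z. if k \<in> {1..K} then max (z k) 0 else 0) \<in> borel_measurable ?M"
      using I by (cases "k \<in> {1..K}") auto
  qed
  have "eN K z \<inter> G \<noteq> {} \<longleftrightarrow>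
      \<sigma> z < 1 \<and> (\<exists>\<theta>\<in>param_simplex K \<inter> G. \<forall>k\<in>{1..K}. z k < \<theta> k) \<or> \<sigma> z = 1 \<and> z_pos z \<in> G" for z
  proof (cases "\<sigma> z" "1 :: real" rule: linorder_cases)
    case less
    then show ?thesis using eN_hits_iff_strictly_above[OF K G, of z] by (simp add: \<sigma>_def)
  next
    case equal
    then show ?thesis using eN_eq_singleton[where K=K and z=z] by (simp add: \<sigma>_def z_pos_def)
  next
    case greater
    then show ?thesis using eN_eq_empty[where K=K and z=z] by (simp add: \<sigma>_def)
  qed
  then have "{z \<in> space ?M. eN K z \<inter> G \<noteq> {}} =
      {z \<in> space ?M. \<sigma> z < 1} \<inter> {z \<in> space ?M. \<exists>\<theta>\<in>param_simplex K \<inter> G. \<forall>k\<in>{1..K}. z k < \<theta> k}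
      \<union> {z \<in> space ?M. \<sigma> z = 1 \<and> z_pos z \<in> G}"
    by blast
  also have "\<dots> \<in> sets ?M"
  proof (intro sets.Un sets.Int)
    show "{z \<in> space ?M. \<sigma> z < 1} \<in> sets ?M" using \<sigma>_meas by measurable
    have "Measurable.pred ?M (\<lambda>z. \<sigma> z = 1)" using \<sigma>_meas by measurable
    moreover have "Measurable.pred ?M (\<lambda>z. z_pos z \<in> G)" using z_pos_meas borel_open[OF G] by measurable
    ultimately show "{z \<in> space ?M. \<sigma> z = 1 \<and> z_pos z \<in> G} \<in> sets ?M"
      by (simp add: pred_def pred_intros_logic)
  qed (rule sets_PiM_strictly_below_some[OF finite_subset[OF I(2,1)] I(2)])
  finally show "{z \<in> space ?M. eN K z \<inter> G \<noteq> {}} \<in> sets ?M" .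
qed

lemma sets_simplex_above_nonempty:
  assumes "finite P"
  shows "{w \<in> space (PiM P (\<lambda>_. borel)). simplex_above K P w \<noteq> {}} \<in> sets (PiM P (\<lambda>_. borel))"
proof -
  have "{w \<in> space (PiM P (\<lambda>_. borel)). simplex_above K P w \<noteq> {}}
      = {w \<in> space (PiM P (\<lambda>_. borel)). \<exists>\<theta>\<in>param_simplex K. \<forall>k\<in>P. w k < \<theta> k}"
    by (auto simp: simplex_above_def)
  then show ?thesis
    using sets_PiM_strictly_below_some[OF assms order_refl, of "param_simplex K"] by simp
qed

lemma eN_hits_iff_simplex_above:
  assumes K: "1 \<le> K" and P: "P \<subseteq> {1..K}" and G: "open G"
    and z: "\<forall>k\<in>{1..K}. 0 \<le> z k" "(\<Sum>k\<in>{1..K}. z k) < 1" "\<forall>k\<in>{1..K} - P. z k = 0"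
  shows "eN K z \<inter> G \<noteq> {} \<longleftrightarrow> simplex_above K P (restrict z P) \<inter> G \<noteq> {}"
proof
  assume "eN K z \<inter> G \<noteq> {}"
  moreover have "(\<Sum>k\<in>{1..K}. max (z k) 0) < 1" using z by (simp add: max_absorb1)
  ultimately obtain \<theta> where "\<theta> \<in> param_simplex K \<inter> G" "\<forall>k\<in>{1..K}. z k < \<theta> k"
    using eN_hits_iff_strictly_above[OF K G] by blast
  then have "\<theta> \<in> simplex_above K P (restrict z P) \<inter> G"
    using P by (auto simp: simplex_above_def)
  then show "simplex_above K P (restrict z P) \<inter> G \<noteq> {}" by blast
next
  assume "simplex_above K P (restrict z P) \<inter> G \<noteq> {}"
  then obtain \<theta> where \<theta>: "\<theta> \<in> param_simplex K" "\<theta> \<in> G" "\<forall>k\<in>P. z k < \<theta> k"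
    by (auto simp: simplex_above_def)
  have "z k \<le> \<theta> k" if "k \<in> {1..K}" for k
    using \<theta>(3) z(3) that param_simplex_nonneg[OF \<theta>(1), of k] by (cases "k \<in> P") auto
  then have "\<theta> \<in> eN K z \<inter> G" using \<theta> by (simp add: eN_def)
  then show "eN K z \<inter> G \<noteq> {}" by blast
qed

section \<open>Conditioning and product densities\<close>

lemma distr_uniform_measure:
  assumes f: "f \<in> measurable M N" and E: "E \<in> sets N"
  shows "distr (uniform_measure M {x \<in> space M. f x \<in> E}) N f = uniform_measure (distr M N f) E"
proof (rule measure_eqI)
  fix B assume "B \<in> sets (distr (uniform_measure M {x \<in> space M. f x \<in> E}) N f)"
  then have B: "B \<in> sets N" by simp
  let ?S = "{x \<in> space M. f x \<in> E}"
  have S: "?S = f -` E \<inter> space M" by auto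
  have "?S \<in> sets M" unfolding S using f E by (rule measurable_sets)
  have "emeasure (distr (uniform_measure M ?S) N f) B = emeasure (uniform_measure M ?S) (f -` B \<inter> space M)"
    using f B by (simp add: emeasure_distr cong: measurable_cong_sets)
  also have "\<dots> = emeasure M (?S \<inter> (f -` B \<inter> space M)) / emeasure M ?S"
    using \<open>?S \<in> sets M\<close> measurable_sets[OF f B] by (rule emeasure_uniform_measure)
  also have "?S \<inter> (f -` B \<inter> space M) = f -` (E \<inter> B) \<inter> space M" by auto
  also have "emeasure M (f -` (E \<inter> B) \<inter> space M) / emeasure M ?S
      = emeasure (distr M N f) (E \<inter> B) / emeasure (distr M N f) E"
    using f E B by (simp add: emeasure_distr S)
  also have "\<dots> = emeasure (uniform_measure (distr M N f) E) B"
    using E B by simp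
  finally show "emeasure (distr (uniform_measure M ?S) N f) B = emeasure (uniform_measure (distr M N f) E) B" .
qed simp

lemma uniform_measure_density_eq:
  assumes f: "f \<in> borel_measurable M" and g: "g \<in> borel_measurable M" and E: "E \<in> sets M"
    and c: "c \<noteq> 0" "c \<noteq> \<infinity>"
    and fg: "\<And>x. x \<in> space M \<Longrightarrow> f x * indicator E x = c * g x"
    and prob: "prob_space (density M g)"
  shows "uniform_measure (density M f) E = density M g"
proof -
  have "emeasure (density M f) E = (\<integral>\<^sup>+x. c * g x \<partial>M)"
    unfolding emeasure_density[OF f E] by (rule nn_integral_cong) (rule fg)
  also have "\<dots> = c * emeasure (density M g) (space M)"
    using g by (simp add: nn_integral_cmult emeasure_density)
  also have "\<dots> = c"
    using prob_space.emeasure_space_1[OF prob] by simp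
  finally have "emeasure (density M f) E = c" .
  then have "uniform_measure (density M f) E = density M (\<lambda>x. f x * (indicator E x / c))"
    unfolding uniform_measure_def using f E by (simp add: density_density_eq)
  also have "\<dots> = density M g"
  proof (rule density_cong)
    show "AE x in M. f x * (indicator E x / c) = g x"
      using fg c by (auto simp: ennreal_times_divide mult.commute[of c] mult_divide_eq_ennreal)
  qed (use f g E in simp_all)
  finally show ?thesis .
qed

lemma PiM_density_lborel:
  fixes f :: "'i \<Rightarrow> real \<Rightarrow> ennreal"
  assumes I: "finite I"
    and f: "\<And>i. i \<in> I \<Longrightarrow> f i \<in> borel_measurable borel"
    and prob: "\<And>i. i \<in> I \<Longrightarrow> prob_space (density lborel (f i))"
  shows "PiM I (\<lambda>i. density lborel (f i)) = density (PiM I (\<lambda>_. lborel)) (\<lambda>x. \<Prod>i\<in>I. f i (x i))"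
proof -
  define M where "M i = (if i \<in> I then density lborel (f i) else lborel)" for i
  have "sigma_finite_measure (M i)" for i
    using prob[THEN prob_space.finite_measure, THEN finite_measure.sigma_finite_measure]
    by (cases "i \<in> I") (simp_all add: M_def sigma_finite_lborel)
  then interpret product_sigma_finite M unfolding product_sigma_finite_def by blast
  interpret L: product_sigma_finite "\<lambda>_. lborel :: real measure" by standard
  have "PiM I (\<lambda>i. density lborel (f i)) = PiM I M"
    by (rule PiM_cong) (simp_all add: M_def)
  also have "\<dots> = density (PiM I (\<lambda>_. lborel)) (\<lambda>x. \<Prod>i\<in>I. f i (x i))"
  proof (rule PiM_eqI[symmetric, OF I])
    show "sets (density (PiM I (\<lambda>_. lborel)) (\<lambda>x. \<Prod>i\<in>I. f i (x i))) = sets (PiM I M)"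
      by (simp add: M_def cong: sets_PiM_cong)
  next
    fix A assume "\<And>i. i \<in> I \<Longrightarrow> A i \<in> sets (M i)"
    then have A: "\<And>i. i \<in> I \<Longrightarrow> A i \<in> sets borel" by (simp add: M_def split: if_splits)
    have [measurable]: "(\<lambda>x. \<Prod>i\<in>I. f i (x i)) \<in> borel_measurable (PiM I (\<lambda>_. lborel))"
      using f by (intro borel_measurable_prod_ennreal)
        (auto intro!: measurable_compose[OF measurable_component_singleton])
    have "emeasure (density (PiM I (\<lambda>_. lborel)) (\<lambda>x. \<Prod>i\<in>I. f i (x i))) (Pi\<^sub>E I A)
        = (\<integral>\<^sup>+x. (\<Prod>i\<in>I. f i (x i)) * indicator (Pi\<^sub>E I A) x \<partial>PiM I (\<lambda>_. lborel))"
      using A I by (intro emeasure_density) (auto intro!: sets_PiM_I_finite)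
    also have "\<dots> = (\<integral>\<^sup>+x. (\<Prod>i\<in>I. f i (x i) * indicator (A i) (x i)) \<partial>PiM I (\<lambda>_. lborel))"
      by (intro nn_integral_cong)
        (auto simp: I space_PiM indicator_def PiE_def Pi_def prod.distrib)
    also have "\<dots> = (\<Prod>i\<in>I. \<integral>\<^sup>+y. f i y * indicator (A i) y \<partial>lborel)"
      using f A I by (intro L.product_nn_integral_prod) auto
    also have "\<dots> = (\<Prod>i\<in>I. emeasure (M i) (A i))"
      using f A by (intro prod.cong refl) (simp add: M_def emeasure_density)
    finally show "emeasure (density (PiM I (\<lambda>_. lborel)) (\<lambda>x. \<Prod>i\<in>I. f i (x i))) (Pi\<^sub>E I A)
        = (\<Prod>i\<in>I. emeasure (M i) (A i))" .
  qed
  finally show ?thesis .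
qed

lemma nn_integral_PiM_lborel_scale:
  fixes c :: real
  assumes c: "c > 0" and I: "finite I" and F: "F \<in> borel_measurable (PiM I (\<lambda>_. lborel))"
  shows "(\<integral>\<^sup>+x. F x \<partial>PiM I (\<lambda>_. lborel)) =
         ennreal (c ^ card I) * (\<integral>\<^sup>+x. F (\<lambda>k\<in>I. c * x k) \<partial>PiM I (\<lambda>_. lborel))"
  using I F
proof (induction I arbitrary: F rule: finite_induct)
  case empty
  then show ?case by (simp add: PiM_empty nn_integral_count_space_finite)
next
  case (insert i I)
  interpret product_sigma_finite "\<lambda>_. lborel :: real measure" by standard
  note F[measurable] = insert.prems
  let ?L = "\<lambda>I. PiM I (\<lambda>_. lborel :: real measure)"
  define G where "G x = (\<integral>\<^sup>+y. F (x(i := c * y)) \<partial>lborel)" for x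
  have upd: "(\<lambda>(x, y). x(i := c * y)) \<in> measurable (?L I \<Otimes>\<^sub>M lborel) (?L (insert i I))"
  proof (rule measurable_PiM_single')
    fix k assume "k \<in> insert i I"
    then show "(\<lambda>\<omega>. (case \<omega> of (x, y) \<Rightarrow> x(i := c * y)) k) \<in> measurable (?L I \<Otimes>\<^sub>M lborel) lborel"
      by (cases "k = i") (auto simp: split_beta')
  qed (use insert(2) in \<open>auto simp: space_pair_measure space_PiM PiE_def extensional_def\<close>)
  have G_meas: "G \<in> borel_measurable (?L I)"
    unfolding G_def using measurable_compose[OF upd F]
    by (intro lborel.borel_measurable_nn_integral) (simp add: split_beta')
  have "(\<integral>\<^sup>+x. F x \<partial>?L (insert i I)) = (\<integral>\<^sup>+x. \<integral>\<^sup>+y. F (x(i := y)) \<partial>lborel \<partial>?L I)"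
    by (rule product_nn_integral_insert[OF insert(1,2) F])
  also have "\<dots> = (\<integral>\<^sup>+x. ennreal c * G x \<partial>?L I)"
  proof (rule nn_integral_cong)
    fix x assume x: "x \<in> space (?L I)"
    have "(\<lambda>y. F (x(i := y))) \<in> borel_measurable borel"
      using measurable_comp[OF measurable_component_update[OF x insert(2)] F] by (simp add: comp_def)
    then show "(\<integral>\<^sup>+y. F (x(i := y)) \<partial>lborel) = ennreal c * G x"
      using nn_integral_real_affine[of "\<lambda>y. F (x(i := y))" c 0] c by (simp add: G_def)
  qed
  also have "\<dots> = ennreal c * (ennreal (c ^ card I) * (\<integral>\<^sup>+x. G (\<lambda>k\<in>I. c * x k) \<partial>?L I))"
    by (simp only: nn_integral_cmult[OF G_meas] insert.IH[OF G_meas])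
  also have "(\<integral>\<^sup>+x. G (\<lambda>k\<in>I. c * x k) \<partial>?L I) = (\<integral>\<^sup>+x. F (\<lambda>k\<in>insert i I. c * x k) \<partial>?L (insert i I))"
  proof -
    have "(\<lambda>x. F (\<lambda>k\<in>insert i I. c * x k)) \<in> borel_measurable (?L (insert i I))"
      by measurable
    from product_nn_integral_insert[OF insert(1,2) this]
    have "(\<integral>\<^sup>+x. F (\<lambda>k\<in>insert i I. c * x k) \<partial>?L (insert i I))
        = (\<integral>\<^sup>+x. \<integral>\<^sup>+y. F (\<lambda>k\<in>insert i I. c * (x(i := y)) k) \<partial>lborel \<partial>?L I)" .
    moreover have "(\<lambda>k\<in>insert i I. c * (x(i := y)) k) = (\<lambda>k\<in>I. c * x k)(i := c * y)" for x y
      using insert(2) by (auto simp: fun_eq_iff)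
    ultimately show ?thesis by (simp add: G_def)
  qed
  moreover have "ennreal c * ennreal (c ^ card I) = ennreal (c ^ card (insert i I))"
    using c insert(1,2) by (simp add: ennreal_mult[symmetric])
  ultimately show ?case by (simp only: mult.assoc[symmetric])
qed

lemma sets_PiM_borel_eq_sigma_atMost:
  assumes P: "finite P"
  shows "sets (PiM P (\<lambda>_. borel :: real measure)) =
         sigma_sets (PiE P (\<lambda>_. UNIV)) {PiE P (\<lambda>k. {..a k}) | a. True}"
proof -
  let ?E = "\<lambda>_ :: 'i. range (\<lambda>a :: real. {..a})"
  let ?Q = "{{f \<in> PiE P (\<lambda>_. UNIV). \<forall>i\<in>J. f i \<in> A i} | A J. J \<in> {P} \<and> A \<in> Pi J ?E}"
  have "sets (PiM P (\<lambda>_. borel :: real measure)) = sets (PiM P (\<lambda>i. sigma UNIV (?E i)))"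
    by (simp add: borel_eq_atMost[symmetric])
  also have "\<dots> = sets (sigma (PiE P (\<lambda>_. UNIV)) ?Q)"
  proof (rule sets_PiM_sigma)
    show "\<exists>S\<subseteq>?E i. countable S \<and> UNIV = \<Union>S" for i
    proof (intro exI conjI)
      show "range (\<lambda>j :: nat. {..real j}) \<subseteq> ?E i" by auto
      show "UNIV = \<Union>(range (\<lambda>j :: nat. {..real j}))" by (auto intro: real_arch_simple)
    qed simp
  qed (use P in auto)
  also have "?Q = {PiE P (\<lambda>k. {..a k}) | a. True}"
  proof (intro equalityI subsetI)
    fix X assume "X \<in> ?Q"
    then obtain A where A: "X = {f \<in> PiE P (\<lambda>_. UNIV). \<forall>i\<in>P. f i \<in> A i}" "A \<in> Pi P ?E" by auto
    then have "\<forall>i\<in>P. \<exists>a. A i = {..a}" by (auto simp: Pi_iff)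
    then obtain a where "\<forall>i\<in>P. A i = {..a i}" by metis
    then have "X = PiE P (\<lambda>k. {..a k})" using A(1) by (auto simp: PiE_iff extensional_def)
    then show "X \<in> {PiE P (\<lambda>k. {..a k}) | a. True}" by blast
  next
    fix X assume "X \<in> {PiE P (\<lambda>k. {..a k :: real}) | a. True}"
    then obtain a where "X = PiE P (\<lambda>k. {..a k})" by blast
    then have "X = {f \<in> PiE P (\<lambda>_. UNIV). \<forall>i\<in>P. f i \<in> {..a i}}"
      by (auto simp: PiE_iff extensional_def)
    then show "X \<in> ?Q" by (intro CollectI exI[of _ "\<lambda>k. {..a k}"] exI[of _ P]) auto
  qed
  moreover have "{PiE P (\<lambda>k. {..a k}) | a. True} \<subseteq> Pow (PiE P (\<lambda>_. UNIV :: real set))"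
    by (auto simp: PiE_iff)
  ultimately show ?thesis by simp
qed

lemma PiM_borel_measure_eqI_atMost:
  fixes M M' :: "('i \<Rightarrow> real) measure"
  assumes P: "finite P"
    and sets: "sets M = sets (PiM P (\<lambda>_. borel))" "sets M' = sets (PiM P (\<lambda>_. borel))"
    and fin: "finite_measure M"
    and eq: "\<And>a. emeasure M (PiE P (\<lambda>k. {..a k})) = emeasure M' (PiE P (\<lambda>k. {..a k}))"
  shows "M = M'"
proof (rule measure_eqI_generator_eq[where E = "{PiE P (\<lambda>k. {..a k :: real}) | a. True}"
      and \<Omega> = "PiE P (\<lambda>_. UNIV)" and A = "\<lambda>j. PiE P (\<lambda>_. {..real j})"])
  show "Int_stable {PiE P (\<lambda>k. {..a k :: real}) | a. True}"
  proof (rule Int_stableI)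
    fix A B :: "('i \<Rightarrow> real) set"
    assume "A \<in> {PiE P (\<lambda>k. {..a k :: real}) | a. True}" "B \<in> {PiE P (\<lambda>k. {..a k :: real}) | a. True}"
    then obtain a b where "A = PiE P (\<lambda>k. {..a k})" "B = PiE P (\<lambda>k. {..b k})" by blast
    then have "A \<inter> B = PiE P (\<lambda>k. {..min (a k) (b k)})" by (simp add: PiE_Int)
    then show "A \<inter> B \<in> {PiE P (\<lambda>k. {..a k :: real}) | a. True}" by auto
  qed
  show "{PiE P (\<lambda>k. {..a k :: real}) | a. True} \<subseteq> Pow (PiE P (\<lambda>_. UNIV))"
    by (auto simp: PiE_iff)
  show "(\<Union>j. PiE P (\<lambda>_. {..real j})) = PiE P (\<lambda>_. UNIV)"
  proof (intro equalityI subsetI)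
    fix f :: "'i \<Rightarrow> real" assume f: "f \<in> PiE P (\<lambda>_. UNIV)"
    obtain j :: nat where j: "Max (f ` P) \<le> real j" using real_arch_simple by blast
    have "f k \<le> real j" if "k \<in> P" for k
      using Max_ge[OF finite_imageI[OF P] imageI[OF that, of f]] j by linarith
    then have "f \<in> PiE P (\<lambda>_. {..real j})" using f by (simp add: PiE_iff)
    then show "f \<in> (\<Union>j. PiE P (\<lambda>_. {..real j}))" by blast
  qed (simp add: PiE_iff)
  show "range (\<lambda>j. PiE P (\<lambda>_. {..real j})) \<subseteq> {PiE P (\<lambda>k. {..a k :: real}) | a. True}"
    by auto
  show "emeasure M (PiE P (\<lambda>_. {..real j})) \<noteq> \<infinity>" for j
    using fin by (simp add: finite_measure.emeasure_finite)
  show "sets M = sigma_sets (PiE P (\<lambda>_. UNIV)) {PiE P (\<lambda>k. {..a k :: real}) | a. True}"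
    using sets(1) sets_PiM_borel_eq_sigma_atMost[OF P] by simp
  show "sets M' = sigma_sets (PiE P (\<lambda>_. UNIV)) {PiE P (\<lambda>k. {..a k :: real}) | a. True}"
    using sets(2) sets_PiM_borel_eq_sigma_atMost[OF P] by simp
qed (use eq in auto)

lemma emeasure_distr_density:
  assumes f: "f \<in> measurable M N" and g: "g \<in> borel_measurable M" and B: "B \<in> sets N"
  shows "emeasure (distr (density M g) N f) B = (\<integral>\<^sup>+x. g x * indicator B (f x) \<partial>M)"
proof -
  have "emeasure (distr (density M g) N f) B = emeasure (density M g) (f -` B \<inter> space M)"
    using f B by (simp add: emeasure_distr cong: measurable_cong_sets)
  also have "\<dots> = (\<integral>\<^sup>+x. g x * indicator B (f x) \<partial>M)"
    using measurable_sets[OF f B] g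
    by (subst emeasure_density) (auto intro!: nn_integral_cong simp: indicator_def)
  finally show ?thesis .
qed

section \<open>Gamma and Dirichlet distributions\<close>

lemma borel_measurable_gamma_density[measurable]: "gamma_density a \<in> borel_measurable borel"
  unfolding gamma_density_def by measurable

lemma gamma_density_of_nat:
  "gamma_density (real (Suc m)) x = (if 0 < x then x ^ m * exp (- x) / fact m else 0)"
proof -
  have "Gamma (1 + real m) = fact m" by (rule Gamma_fact)
  then show ?thesis by (simp add: gamma_density_def powr_realpow add.commute)
qed

lemma prob_space_gamma_density:
  assumes a: "0 < a"
  shows "prob_space (density lborel (\<lambda>x. ennreal (gamma_density a x)))"
proof (rule prob_spaceI)
  let ?f = "\<lambda>t. t powr (a - 1) / exp t / Gamma a"
  have "(?f has_integral Gamma a / Gamma a) {0..}"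
    using Gamma_integral_real[OF a] by (rule has_integral_divide)
  then have "(\<integral>\<^sup>+t. ennreal (?f t) * indicator {0..} t \<partial>lborel) = 1"
    using a Gamma_real_pos[OF a] by (subst nn_integral_has_integral_lebesgue') auto
  moreover have "ennreal (gamma_density a t) = ennreal (?f t) * indicator {0..} t" for t
    by (cases "0 < t") (auto simp: gamma_density_def indicator_def exp_minus field_simps)
  ultimately show "emeasure (density lborel (\<lambda>x. ennreal (gamma_density a x)))
      (space (density lborel (\<lambda>x. ennreal (gamma_density a x)))) = 1"
    by (simp add: emeasure_density)
qed

definition dirichlet_normalise :: "nat set \<Rightarrow> (nat \<Rightarrow> real) \<Rightarrow> (nat \<Rightarrow> real) \<Rightarrow> nat \<Rightarrow> real" where
  "dirichlet_normalise I \<alpha> g = (\<lambda>j\<in>I. if 0 < \<alpha> j then g j / (\<Sum>i\<in>{j\<in>I. 0 < \<alpha> j}. g i) else 0)"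

lemma dirichlet_eq_distr_gammas:
  assumes "finite I"
  shows "dirichlet I \<alpha> = distr
    (density (PiM {j\<in>I. 0 < \<alpha> j} (\<lambda>_. lborel)) (\<lambda>g. \<Prod>j\<in>{j\<in>I. 0 < \<alpha> j}. ennreal (gamma_density (\<alpha> j) (g j))))
    (PiM I (\<lambda>_. borel)) (dirichlet_normalise I \<alpha>)"
  unfolding dirichlet_def dirichlet_normalise_def
  using assms by (subst PiM_density_lborel) (auto intro: prob_space_gamma_density)

lemma measurable_dirichlet_normalise:
  assumes "finite I"
  shows "dirichlet_normalise I \<alpha> \<in> measurable (PiM {j\<in>I. 0 < \<alpha> j} (\<lambda>_. borel)) (PiM I (\<lambda>_. borel))"
  unfolding dirichlet_normalise_def
proof (rule measurable_restrict)
  fix j assume j: "j \<in> I"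
  show "(\<lambda>g. if 0 < \<alpha> j then g j / (\<Sum>i\<in>{j\<in>I. 0 < \<alpha> j}. g i) else 0)
      \<in> borel_measurable (PiM {j\<in>I. 0 < \<alpha> j} (\<lambda>_. borel :: real measure))"
  proof (cases "0 < \<alpha> j")
    case True
    then have "j \<in> {j\<in>I. 0 < \<alpha> j}" using j by simp
    then have "(\<lambda>g. g j / (\<Sum>i\<in>{j\<in>I. 0 < \<alpha> j}. g i))
        \<in> borel_measurable (PiM {j\<in>I. 0 < \<alpha> j} (\<lambda>_. borel :: real measure))"
      using assms by (intro borel_measurable_divide borel_measurable_sum measurable_component_singleton) auto
    with True show ?thesis by simp
  qed simp
qed

lemma sets_dirichlet[measurable_cong]: "sets (dirichlet I \<alpha>) = sets (PiM I (\<lambda>_. borel))"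
  by (simp add: dirichlet_def)

lemma prob_space_dirichlet:
  assumes "finite I"
  shows "prob_space (dirichlet I \<alpha>)"
  unfolding dirichlet_def
proof (rule prob_space.prob_space_distr)
  show "prob_space (PiM {j\<in>I. 0 < \<alpha> j} (\<lambda>j. density lborel (gamma_density (\<alpha> j))))"
    by (auto intro!: prob_space_PiM prob_space_gamma_density)
  show "(\<lambda>g. \<lambda>j\<in>I. if 0 < \<alpha> j then g j / (\<Sum>i\<in>{j\<in>I. 0 < \<alpha> j}. g i) else 0)
      \<in> measurable (PiM {j\<in>I. 0 < \<alpha> j} (\<lambda>j. density lborel (gamma_density (\<alpha> j)))) (PiM I (\<lambda>_. borel))"
    using measurable_dirichlet_normalise[OF assms, of \<alpha>]
    unfolding dirichlet_normalise_def by (simp cong: measurable_cong_sets sets_PiM_cong)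
qed

lemma AE_dirichlet_simplex:
  assumes I: "finite I" and pos: "j\<^sub>0 \<in> I" "0 < \<alpha> j\<^sub>0"
  shows "AE z in dirichlet I \<alpha>. (\<forall>j\<in>I. 0 < \<alpha> j \<longrightarrow> 0 < z j) \<and> (\<forall>j\<in>I. \<not> 0 < \<alpha> j \<longrightarrow> z j = 0)
                                \<and> (\<Sum>j\<in>I. z j) = 1"
proof -
  define J where "J = {j\<in>I. 0 < \<alpha> j}"
  define \<gamma> where "\<gamma> g = (\<Prod>j\<in>J. ennreal (gamma_density (\<alpha> j) (g j)))" for g
  have J: "finite J" "j\<^sub>0 \<in> J" using I pos by (auto simp: J_def)
  have [measurable]: "\<gamma> \<in> borel_measurable (PiM J (\<lambda>_. lborel))"
    unfolding \<gamma>_def using J(1) by measurable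
  have "AE g in PiM J (\<lambda>_. lborel). 0 < \<gamma> g \<longrightarrow> (\<forall>j\<in>J. 0 < g j)"
  proof (rule AE_I2, intro impI ballI)
    fix g j assume pos: "0 < \<gamma> g" and j: "j \<in> J"
    show "0 < g j"
    proof (rule ccontr)
      assume "\<not> 0 < g j"
      then have "gamma_density (\<alpha> j) (g j) = 0" by (simp add: gamma_density_def)
      then have "\<exists>i\<in>J. ennreal (gamma_density (\<alpha> i) (g i)) = 0" using j by (intro bexI[of _ j]) simp_all
      then have "\<gamma> g = 0" unfolding \<gamma>_def by (rule prod_zero[OF J(1)])
      with pos show False by simp
    qed
  qed
  then have AE_pos: "AE g in density (PiM J (\<lambda>_. lborel)) \<gamma>. \<forall>j\<in>J. 0 < g j"
    by (simp add: AE_density)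
  have total_pos: "0 < sum g J" if "\<forall>j\<in>J. 0 < g j" for g :: "nat \<Rightarrow> real"
    using that J by (intro sum_pos) auto
  have sum_one: "(\<Sum>j\<in>I. dirichlet_normalise I \<alpha> g j) = 1" if "\<forall>j\<in>J. 0 < g j" for g
  proof -
    note total_pos[OF that]
    moreover have "(\<Sum>j\<in>I. dirichlet_normalise I \<alpha> g j) = (\<Sum>j\<in>J. g j / sum g J)"
      using I by (simp add: dirichlet_normalise_def J_def sum.If_cases Int_def)
    ultimately show ?thesis by (simp add: sum_divide_distrib[symmetric])
  qed
  from AE_pos have "AE g in density (PiM J (\<lambda>_. lborel)) \<gamma>.
      (\<forall>j\<in>I. 0 < \<alpha> j \<longrightarrow> 0 < dirichlet_normalise I \<alpha> g j) \<and>
      (\<forall>j\<in>I. \<not> 0 < \<alpha> j \<longrightarrow> dirichlet_normalise I \<alpha> g j = 0) \<and>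
      (\<Sum>j\<in>I. dirichlet_normalise I \<alpha> g j) = 1"
  proof eventually_elim
    case (elim g)
    then show ?case using total_pos[OF elim] sum_one[OF elim] by (auto simp: dirichlet_normalise_def J_def)
  qed
  then show ?thesis
    unfolding dirichlet_eq_distr_gammas[OF I] J_def[symmetric] \<gamma>_def[symmetric]
    using measurable_dirichlet_normalise[OF I, of \<alpha>] I
    by (subst AE_distr_iff) (auto simp: J_def cong: measurable_cong_sets)
qed

(* Unnormalised Dirichlet density on the simplex of total mass s: s = 1 gives the law of
   (Z_k) for k in P, other values of s occur when the Gamma total mass is integrated out. *)

definition dirichlet_kernel :: "real \<Rightarrow> nat set \<Rightarrow> (nat \<Rightarrow> nat) \<Rightarrow> (nat \<Rightarrow> real) \<Rightarrow> real" where
  "dirichlet_kernel s P N x = (if (\<forall>k\<in>P. 0 < x k) \<and> sum x P < s then \<Prod>k\<in>P. x k ^ (N k - 1) else 0)"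

definition dirichlet_const :: "nat set \<Rightarrow> (nat \<Rightarrow> nat) \<Rightarrow> real" where
  "dirichlet_const P N = fact (sum N P) / (\<Prod>k\<in>P. fact (N k - 1))"

lemma dirichlet_kernel_nonneg: "0 \<le> dirichlet_kernel s P N x"
  unfolding dirichlet_kernel_def by (auto intro!: prod_nonneg)

lemma borel_measurable_dirichlet_kernel:
  "finite P \<Longrightarrow> dirichlet_kernel s P N \<in> borel_measurable (PiM P (\<lambda>_. lborel))"
  unfolding dirichlet_kernel_def by measurable

lemma dirichlet_kernel_nonpos_scale:
  assumes "s \<le> 0"
  shows "dirichlet_kernel s P N x = 0"
proof -
  have "0 \<le> sum x P" if "\<forall>k\<in>P. 0 < x k" using that by (intro sum_nonneg) (simp add: less_imp_le)
  with assms show ?thesis by (auto simp: dirichlet_kernel_def)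
qed

lemma dirichlet_kernel_scale:
  assumes s: "0 < s"
  shows "dirichlet_kernel s P N x = s ^ (\<Sum>k\<in>P. N k - 1) * dirichlet_kernel 1 P N (\<lambda>k. x k / s)"
proof -
  have "(\<Prod>k\<in>P. x k ^ (N k - 1)) = s ^ (\<Sum>k\<in>P. N k - 1) * (\<Prod>k\<in>P. (x k / s) ^ (N k - 1))"
    using s prod_pos[of P "\<lambda>k. s ^ (N k - 1)"] by (simp add: power_divide prod_dividef power_sum)
  moreover have "sum x P < s \<longleftrightarrow> (\<Sum>k\<in>P. x k / s) < 1"
    using s by (simp add: sum_divide_distrib[symmetric])
  moreover have "(\<forall>k\<in>P. 0 < x k) \<longleftrightarrow> (\<forall>k\<in>P. 0 < x k / s)"
    using s by (simp add: zero_less_divide_iff)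
  ultimately show ?thesis
    unfolding dirichlet_kernel_def by (simp only: if_distrib mult_zero_right) simp
qed

lemma dirichlet_const_pos: "0 < dirichlet_const P N"
  unfolding dirichlet_const_def by (auto intro!: divide_pos_pos prod_pos)

lemma prod_gamma_density_of_nat:
  assumes P: "finite P" and N: "\<forall>k\<in>P. 1 \<le> N k"
  shows "(\<Prod>k\<in>P. ennreal (gamma_density (real (N k)) (x k)))
       = ennreal (if \<forall>k\<in>P. 0 < x k
                  then (\<Prod>k\<in>P. x k ^ (N k - 1)) * exp (- sum x P) / (\<Prod>k\<in>P. fact (N k - 1)) else 0)"
proof -
  have "gamma_density (real (N k)) (x k) = (if 0 < x k then x k ^ (N k - 1) * exp (- x k) / fact (N k - 1) else 0)"
    if "k \<in> P" for k
    using gamma_density_of_nat[of "N k - 1" "x k"] N that by (simp add: Suc_diff_le)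
  then have "(\<Prod>k\<in>P. ennreal (gamma_density (real (N k)) (x k)))
      = ennreal (\<Prod>k\<in>P. if 0 < x k then x k ^ (N k - 1) * exp (- x k) / fact (N k - 1) else 0)"
    by (simp add: prod_ennreal cong: prod.cong)
  also have "(\<Prod>k\<in>P. if 0 < x k then x k ^ (N k - 1) * exp (- x k) / fact (N k - 1) else 0)
      = (if \<forall>k\<in>P. 0 < x k
         then (\<Prod>k\<in>P. x k ^ (N k - 1)) * exp (- sum x P) / (\<Prod>k\<in>P. fact (N k - 1)) else 0)"
    using P by (auto simp: prod.distrib prod_dividef exp_sum sum_negf[symmetric] prod_zero_iff
        simp del: exp_minus)
  finally show ?thesis .
qed

lemma nn_integral_exponential_shift:
  fixes g :: "real \<Rightarrow> ennreal"
  assumes g: "g \<in> borel_measurable borel"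
  shows "(\<integral>\<^sup>+y. ennreal (if 0 < y then exp (- y) else 0) * g (y + c) \<partial>lborel)
       = (\<integral>\<^sup>+s. ennreal (if c < s then exp (c - s) else 0) * g s \<partial>lborel)"
  using g by (subst nn_integral_real_affine[where c = 1 and t = "- c"]) (auto intro!: nn_integral_cong)

lemma nn_integral_gamma_shift:
  assumes P: "finite P" and N: "\<forall>k\<in>P. 1 \<le> N k"
    and h[measurable]: "h \<in> borel_measurable (PiM P (\<lambda>_. lborel))"
  shows "(\<integral>\<^sup>+y. ennreal (gamma_density 1 y) * (\<Prod>k\<in>P. ennreal (gamma_density (real (N k)) (x k)))
              * h (\<lambda>k\<in>P. x k / (y + sum x P)) \<partial>lborel)
       = (\<integral>\<^sup>+s. ennreal (exp (- s) / (\<Prod>k\<in>P. fact (N k - 1))) * ennreal (dirichlet_kernel s P N x)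
              * h (\<lambda>k\<in>P. x k / s) \<partial>lborel)"
proof -
  define D :: real where "D = (\<Prod>k\<in>P. fact (N k - 1))"
  define Pw where "Pw = (\<Prod>k\<in>P. x k ^ (N k - 1))"
  let ?g = "\<lambda>s. ennreal (if \<forall>k\<in>P. 0 < x k then Pw * exp (- sum x P) / D else 0) * h (\<lambda>k\<in>P. x k / s)"
  have D: "0 < D" unfolding D_def by (intro prod_pos) auto
  have "gamma_density 1 y = (if 0 < y then exp (- y) else 0)" for y
    using gamma_density_of_nat[of 0 y] by simp
  then have "(\<integral>\<^sup>+y. ennreal (gamma_density 1 y) * (\<Prod>k\<in>P. ennreal (gamma_density (real (N k)) (x k)))
      * h (\<lambda>k\<in>P. x k / (y + sum x P)) \<partial>lborel)
      = (\<integral>\<^sup>+y. ennreal (if 0 < y then exp (- y) else 0) * ?g (y + sum x P) \<partial>lborel)"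
    by (simp add: prod_gamma_density_of_nat[OF P N] Pw_def D_def mult.assoc)
  also have "\<dots> = (\<integral>\<^sup>+s. ennreal (if sum x P < s then exp (sum x P - s) else 0) * ?g s \<partial>lborel)"
    using P by (intro nn_integral_exponential_shift) measurable
  also have "\<dots> = (\<integral>\<^sup>+s. ennreal (exp (- s) / D) * ennreal (dirichlet_kernel s P N x) * h (\<lambda>k\<in>P. x k / s) \<partial>lborel)"
  proof (rule nn_integral_cong)
    fix s
    show "ennreal (if sum x P < s then exp (sum x P - s) else 0) * ?g s
        = ennreal (exp (- s) / D) * ennreal (dirichlet_kernel s P N x) * h (\<lambda>k\<in>P. x k / s)"
    proof (cases "(\<forall>k\<in>P. 0 < x k) \<and> sum x P < s")
      case True
      then have "0 \<le> Pw" unfolding Pw_def by (auto intro!: prod_nonneg)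
      then have eq: "ennreal (exp (sum x P - s)) * ennreal (Pw * exp (- sum x P) / D)
          = ennreal (exp (- s) / D) * ennreal Pw"
        using D by (simp add: ennreal_mult[symmetric] exp_diff exp_minus field_simps)
      from True have pos: "\<forall>k\<in>P. 0 < x k" and lt: "sum x P < s" by auto
      show ?thesis
        unfolding dirichlet_kernel_def Pw_def[symmetric] if_P[OF pos] if_P[OF conjI[OF pos lt]] if_P[OF lt]
          mult.assoc[symmetric] eq ..
    qed (auto simp: dirichlet_kernel_def)
  qed
  finally show ?thesis unfolding D_def .
qed

lemma nn_integral_dirichlet_kernel_slice:
  assumes P: "finite P" and N: "\<forall>k\<in>P. 1 \<le> N k"
    and h: "h \<in> borel_measurable (PiM P (\<lambda>_. lborel))"
  shows "(\<integral>\<^sup>+x. ennreal (dirichlet_kernel s P N x) * h (\<lambda>k\<in>P. x k / s) \<partial>PiM P (\<lambda>_. lborel))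
       = ennreal (s ^ sum N P) * indicator {0<..} s
           * (\<integral>\<^sup>+w. ennreal (dirichlet_kernel 1 P N w) * h w \<partial>PiM P (\<lambda>_. lborel))"
proof (cases "0 < s")
  case s: True
  let ?L = "PiM P (\<lambda>_. lborel :: real measure)"
  define F where "F x = ennreal (dirichlet_kernel 1 P N (\<lambda>k. x k / s)) * h (\<lambda>k\<in>P. x k / s)" for x
  have [measurable]: "h \<in> borel_measurable ?L" by fact
  have F_meas: "F \<in> borel_measurable ?L"
    unfolding F_def dirichlet_kernel_def using P by measurable
  have "sum N P = (\<Sum>k\<in>P. (N k - 1) + 1)"
    using N by (intro sum.cong) auto
  then have "sum N P = (\<Sum>k\<in>P. N k - 1) + card P"
    by (simp only: sum.distrib card_eq_sum)
  then have s_pow: "ennreal (s ^ (\<Sum>k\<in>P. N k - 1)) * ennreal (s ^ card P) = ennreal (s ^ sum N P)"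
    using s by (simp add: ennreal_mult[symmetric] power_add)
  have "(\<integral>\<^sup>+x. ennreal (dirichlet_kernel s P N x) * h (\<lambda>k\<in>P. x k / s) \<partial>?L)
      = (\<integral>\<^sup>+x. ennreal (s ^ (\<Sum>k\<in>P. N k - 1)) * F x \<partial>?L)"
    using s dirichlet_kernel_nonneg
    by (intro nn_integral_cong) (simp add: dirichlet_kernel_scale[OF s] F_def ennreal_mult mult.assoc)
  also have "\<dots> = ennreal (s ^ (\<Sum>k\<in>P. N k - 1)) * (\<integral>\<^sup>+x. F x \<partial>?L)"
    by (rule nn_integral_cmult[OF F_meas])
  also have "(\<integral>\<^sup>+x. F x \<partial>?L) = ennreal (s ^ card P) * (\<integral>\<^sup>+x. F (\<lambda>k\<in>P. s * x k) \<partial>?L)"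
    by (rule nn_integral_PiM_lborel_scale[OF s P F_meas])
  also have "(\<integral>\<^sup>+x. F (\<lambda>k\<in>P. s * x k) \<partial>?L) = (\<integral>\<^sup>+w. ennreal (dirichlet_kernel 1 P N w) * h w \<partial>?L)"
  proof (rule nn_integral_cong)
    fix w assume "w \<in> space ?L"
    then have "(\<lambda>k\<in>P. (\<lambda>k\<in>P. s * w k) k / s) = w"
      using s by (auto simp: space_PiM PiE_def extensional_def fun_eq_iff)
    moreover have "dirichlet_kernel 1 P N (\<lambda>k. (\<lambda>k\<in>P. s * w k) k / s) = dirichlet_kernel 1 P N w"
      using s by (simp add: dirichlet_kernel_def cong: prod.cong sum.cong conj_cong ball_cong)
    ultimately show "F (\<lambda>k\<in>P. s * w k) = ennreal (dirichlet_kernel 1 P N w) * h w"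
      by (simp add: F_def)
  qed
  finally show ?thesis using s by (simp only: mult.assoc[symmetric] s_pow) simp
qed (simp add: dirichlet_kernel_nonpos_scale)

lemma nn_integral_normalised_gammas:
  fixes h :: "(nat \<Rightarrow> real) \<Rightarrow> ennreal"
  assumes P: "finite P" and N: "\<forall>k\<in>P. 1 \<le> N k"
    and h[measurable]: "h \<in> borel_measurable (PiM P (\<lambda>_. lborel))"
  shows "(\<integral>\<^sup>+x. \<integral>\<^sup>+y. ennreal (gamma_density 1 y) * (\<Prod>k\<in>P. ennreal (gamma_density (real (N k)) (x k)))
              * h (\<lambda>k\<in>P. x k / (y + sum x P)) \<partial>lborel \<partial>PiM P (\<lambda>_. lborel))
       = ennreal (dirichlet_const P N) * (\<integral>\<^sup>+w. ennreal (dirichlet_kernel 1 P N w) * h w \<partial>PiM P (\<lambda>_. lborel))"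
proof -
  let ?L = "PiM P (\<lambda>_. lborel :: real measure)"
  define D :: real where "D = (\<Prod>k\<in>P. fact (N k - 1))"
  define R where "R = (\<integral>\<^sup>+w. ennreal (dirichlet_kernel 1 P N w) * h w \<partial>?L)"
  define \<Phi> where "\<Phi> x s = ennreal (exp (- s) / D) * ennreal (dirichlet_kernel s P N x) * h (\<lambda>k\<in>P. x k / s)"
    for x s
  have D: "0 < D" unfolding D_def by (intro prod_pos) auto
  interpret L: product_sigma_finite "\<lambda>_. lborel :: real measure" by standard
  interpret PL: finite_product_sigma_finite "\<lambda>_. lborel :: real measure" P by standard fact
  interpret pair_sigma_finite ?L lborel by standard
  have \<Phi>_meas: "case_prod \<Phi> \<in> borel_measurable (?L \<Otimes>\<^sub>M lborel)"
    unfolding \<Phi>_def dirichlet_kernel_def using P by measurable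
  have slice: "(\<integral>\<^sup>+x. \<Phi> x s \<partial>?L) = ennreal (exp (- s) / D) * (ennreal (s ^ sum N P) * indicator {0<..} s * R)"
    for s
  proof -
    have meas: "(\<lambda>x. ennreal (dirichlet_kernel s P N x) * h (\<lambda>k\<in>P. x k / s)) \<in> borel_measurable ?L"
      unfolding dirichlet_kernel_def using P by measurable
    show ?thesis
      unfolding \<Phi>_def mult.assoc nn_integral_cmult[OF meas] R_def nn_integral_dirichlet_kernel_slice[OF P N h]
      by (simp only: mult.assoc)
  qed
  have "(\<integral>\<^sup>+x. \<integral>\<^sup>+y. ennreal (gamma_density 1 y) * (\<Prod>k\<in>P. ennreal (gamma_density (real (N k)) (x k)))
      * h (\<lambda>k\<in>P. x k / (y + sum x P)) \<partial>lborel \<partial>?L) = (\<integral>\<^sup>+x. \<integral>\<^sup>+s. \<Phi> x s \<partial>lborel \<partial>?L)"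
    by (simp only: nn_integral_gamma_shift[OF P N h] \<Phi>_def D_def)
  also have "\<dots> = (\<integral>\<^sup>+s. \<integral>\<^sup>+x. \<Phi> x s \<partial>?L \<partial>lborel)"
    by (rule Fubini'[OF \<Phi>_meas, symmetric])
  also have "\<dots> = (\<integral>\<^sup>+s. ennreal (s ^ sum N P * exp (- s)) * indicator {0..} s * (ennreal (1 / D) * R) \<partial>lborel)"
  proof (rule nn_integral_cong_AE)
    show "AE s in lborel. (\<integral>\<^sup>+x. \<Phi> x s \<partial>?L)
        = ennreal (s ^ sum N P * exp (- s)) * indicator {0..} s * (ennreal (1 / D) * R)"
      using AE_lborel_singleton[of 0]
    proof eventually_elim
      case (elim s)
      show ?case
      proof (cases "0 < s")
        case True
        then have "ennreal (exp (- s) / D) * ennreal (s ^ sum N P) = ennreal (s ^ sum N P * exp (- s)) * ennreal (1 / D)"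
          using D by (simp add: ennreal_mult[symmetric])
        with True show ?thesis by (simp add: slice ac_simps)
      qed (use elim in \<open>simp add: slice\<close>)
    qed
  qed
  also have "\<dots> = ennreal (fact (sum N P)) * (ennreal (1 / D) * R)"
    by (subst nn_integral_multc) (simp_all add: nn_intergal_power_times_exp_Ici)
  also have "\<dots> = ennreal (dirichlet_const P N) * R"
    using D by (simp add: dirichlet_const_def D_def ennreal_mult[symmetric] mult.assoc[symmetric])
  finally show ?thesis unfolding R_def .
qed

lemma prod_gamma_density_insert_zero:
  assumes "finite P" "0 \<notin> P"
  shows "(\<Prod>j\<in>insert 0 P. ennreal (gamma_density (if j = 0 then 1 else real (N j)) ((x(0 := y)) j)))
       = ennreal (gamma_density 1 y) * (\<Prod>k\<in>P. ennreal (gamma_density (real (N k)) (x k)))"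
proof -
  have "(\<Prod>k\<in>P. ennreal (gamma_density (if k = 0 then 1 else real (N k)) ((x(0 := y)) k)))
      = (\<Prod>k\<in>P. ennreal (gamma_density (real (N k)) (x k)))"
    using assms(2) by (intro prod.cong refl) auto
  then show ?thesis using assms by simp
qed

lemma restrict_dirichlet_normalise_insert_zero:
  fixes K :: nat and N :: "nat \<Rightarrow> nat"
  defines "P \<equiv> {k\<in>{1..K}. 0 < N k}"
  shows "restrict (dirichlet_normalise {0..K} (\<lambda>j. if j = 0 then 1 else real (N j)) (x(0 := y))) P
       = (\<lambda>k\<in>P. x k / (y + sum x P))"
proof
  fix k
  have J: "{j\<in>{0..K}. 0 < (if j = 0 then 1 else real (N j))} = insert 0 P"
    by (auto simp: P_def)
  have "sum (x(0 := y)) P = sum x P"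
    by (intro sum.cong) (auto simp: P_def)
  then have "sum (x(0 := y)) (insert 0 P) = y + sum x P"
    by (simp add: P_def)
  then show "restrict (dirichlet_normalise {0..K} (\<lambda>j. if j = 0 then 1 else real (N j)) (x(0 := y))) P k
      = (\<lambda>k\<in>P. x k / (y + sum x P)) k"
    unfolding dirichlet_normalise_def J by (auto simp: P_def)
qed

lemma distr_dirichlet_restrict:
  fixes K :: nat and N :: "nat \<Rightarrow> nat"
  defines "P \<equiv> {k\<in>{1..K}. 0 < N k}"
  shows "distr (dirichlet {0..K} (\<lambda>j. if j = 0 then 1 else real (N j))) (PiM P (\<lambda>_. borel)) (\<lambda>z. restrict z P)
       = density (PiM P (\<lambda>_. lborel)) (\<lambda>w. ennreal (dirichlet_const P N * dirichlet_kernel 1 P N w))"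
    (is "distr ?D _ _ = _")
proof -
  define \<alpha> where "\<alpha> j = (if j = 0 then 1 else real (N j))" for j
  define \<gamma> where "\<gamma> g = (\<Prod>j\<in>insert 0 P. ennreal (gamma_density (\<alpha> j) (g j)))" for g
  define \<phi> where "\<phi> g = restrict (dirichlet_normalise {0..K} \<alpha> g) P" for g
  let ?L = "\<lambda>I. PiM I (\<lambda>_. lborel :: real measure)"
  have P: "finite P" "0 \<notin> P" "P \<subseteq> {0..K}" and N: "\<forall>k\<in>P. 1 \<le> N k"
    by (auto simp: P_def)
  have J: "{j\<in>{0..K}. 0 < \<alpha> j} = insert 0 P" by (auto simp: P_def \<alpha>_def)
  have \<gamma>_meas: "\<gamma> \<in> borel_measurable (?L (insert 0 P))"
    unfolding \<gamma>_def using P(1) by measurable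
  have normalise_meas: "dirichlet_normalise {0..K} \<alpha> \<in> measurable (?L (insert 0 P)) (PiM {0..K} (\<lambda>_. borel))"
    using measurable_dirichlet_normalise[of "{0..K}" \<alpha>]
    unfolding J by (simp cong: measurable_cong_sets sets_PiM_cong)
  have \<phi>_meas: "\<phi> \<in> measurable (?L (insert 0 P)) (PiM P (\<lambda>_. borel))"
    unfolding \<phi>_def by (rule measurable_compose[OF normalise_meas measurable_restrict_subset[OF P(3)]])
  have D: "dirichlet {0..K} \<alpha> = distr (density (?L (insert 0 P)) \<gamma>) (PiM {0..K} (\<lambda>_. borel)) (dirichlet_normalise {0..K} \<alpha>)"
    using dirichlet_eq_distr_gammas[OF finite_atLeastAtMost, of 0 K \<alpha>]
    unfolding J unfolding \<gamma>_def[abs_def] .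
  have distr_eq: "distr ?D (PiM P (\<lambda>_. borel)) (\<lambda>z. restrict z P)
      = distr (density (?L (insert 0 P)) \<gamma>) (PiM P (\<lambda>_. borel)) \<phi>"
    unfolding \<alpha>_def[abs_def, symmetric] D using normalise_meas measurable_restrict_subset[OF P(3)]
    by (subst distr_distr) (simp_all add: \<phi>_def[abs_def] comp_def cong: measurable_cong_sets)
  have \<gamma>_insert: "\<gamma> (x(0 := y)) = ennreal (gamma_density 1 y) * (\<Prod>k\<in>P. ennreal (gamma_density (real (N k)) (x k)))"
    for x y
    unfolding \<gamma>_def \<alpha>_def by (rule prod_gamma_density_insert_zero[OF P(1,2)])
  have \<phi>_insert: "\<phi> (x(0 := y)) = (\<lambda>k\<in>P. x k / (y + sum x P))" for x y
    unfolding \<phi>_def \<alpha>_def P_def by (rule restrict_dirichlet_normalise_insert_zero)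
  have emeasure_eq: "emeasure (distr (density (?L (insert 0 P)) \<gamma>) (PiM P (\<lambda>_. borel)) \<phi>) B
      = emeasure (density (?L P) (\<lambda>w. ennreal (dirichlet_const P N * dirichlet_kernel 1 P N w))) B"
    if B: "B \<in> sets (PiM P (\<lambda>_. borel))" for B
  proof -
    have F_meas: "(\<lambda>g. \<gamma> g * indicator B (\<phi> g)) \<in> borel_measurable (?L (insert 0 P))"
      using \<gamma>_meas \<phi>_meas B by measurable
    have "emeasure (distr (density (?L (insert 0 P)) \<gamma>) (PiM P (\<lambda>_. borel)) \<phi>) B
        = (\<integral>\<^sup>+g. \<gamma> g * indicator B (\<phi> g) \<partial>?L (insert 0 P))"
      by (rule emeasure_distr_density[OF \<phi>_meas \<gamma>_meas B])
    also have "\<dots> = (\<integral>\<^sup>+x. \<integral>\<^sup>+y. ennreal (gamma_density 1 y) * (\<Prod>k\<in>P. ennreal (gamma_density (real (N k)) (x k)))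
        * indicator B (\<lambda>k\<in>P. x k / (y + sum x P)) \<partial>lborel \<partial>?L P)"
      using F_meas P
      by (subst product_sigma_finite.product_nn_integral_insert)
         (simp_all add: product_sigma_finite_def sigma_finite_lborel \<gamma>_insert \<phi>_insert)
    also have "\<dots> = ennreal (dirichlet_const P N) * (\<integral>\<^sup>+w. ennreal (dirichlet_kernel 1 P N w) * indicator B w \<partial>?L P)"
      using B by (intro nn_integral_normalised_gammas[OF P(1) N]) simp
    also have "\<dots> = (\<integral>\<^sup>+w. ennreal (dirichlet_const P N * dirichlet_kernel 1 P N w) * indicator B w \<partial>?L P)"
      using B borel_measurable_dirichlet_kernel[OF P(1), of 1 N] dirichlet_const_pos[of P N]
      by (subst nn_integral_cmult[symmetric])
         (simp_all add: ennreal_mult dirichlet_kernel_nonneg mult.assoc)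
    also have "\<dots> = emeasure (density (?L P) (\<lambda>w. ennreal (dirichlet_const P N * dirichlet_kernel 1 P N w))) B"
      using B borel_measurable_dirichlet_kernel[OF P(1), of 1 N]
      by (subst emeasure_density) simp_all
    finally show ?thesis .
  qed
  show ?thesis
    unfolding distr_eq by (rule measure_eqI) (simp_all add: emeasure_eq cong: sets_PiM_cong)
qed

lemma prob_space_dirichlet_marginal:
  fixes K :: nat and N :: "nat \<Rightarrow> nat"
  defines "P \<equiv> {k\<in>{1..K}. 0 < N k}"
  shows "prob_space (density (PiM P (\<lambda>_. lborel)) (\<lambda>w. ennreal (dirichlet_const P N * dirichlet_kernel 1 P N w)))"
  unfolding P_def distr_dirichlet_restrict[symmetric]
proof (rule prob_space.prob_space_distr[OF prob_space_dirichlet])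
  show "(\<lambda>z. restrict z {k\<in>{1..K}. 0 < N k}) \<in> measurable (dirichlet {0..K} (\<lambda>j. if j = 0 then 1 else real (N j)))
      (PiM {k\<in>{1..K}. 0 < N k} (\<lambda>_. borel))"
    by (simp cong: measurable_cong_sets)
qed simp

lemma AE_dirichlet_cells:
  fixes K :: nat and N :: "nat \<Rightarrow> nat"
  shows "AE z in dirichlet {0..K} (\<lambda>j. if j = 0 then 1 else real (N j)).
           (\<forall>k\<in>{1..K}. 0 \<le> z k \<and> (N k = 0 \<longrightarrow> z k = 0)) \<and> (\<Sum>k\<in>{1..K}. z k) < 1"
proof -
  define \<alpha> where "\<alpha> j = (if j = 0 then 1 else real (N j))" for j
  have "AE z in dirichlet {0..K} \<alpha>. (\<forall>j\<in>{0..K}. 0 < \<alpha> j \<longrightarrow> 0 < z j)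
      \<and> (\<forall>j\<in>{0..K}. \<not> 0 < \<alpha> j \<longrightarrow> z j = 0) \<and> (\<Sum>j\<in>{0..K}. z j) = 1"
    by (rule AE_dirichlet_simplex) (auto simp: \<alpha>_def)
  then have "AE z in dirichlet {0..K} \<alpha>.
      (\<forall>k\<in>{1..K}. 0 \<le> z k \<and> (N k = 0 \<longrightarrow> z k = 0)) \<and> (\<Sum>k\<in>{1..K}. z k) < 1"
  proof eventually_elim
    case (elim z)
    then have pos: "\<And>j. j \<in> {0..K} \<Longrightarrow> 0 < \<alpha> j \<Longrightarrow> 0 < z j"
      and zero: "\<And>j. j \<in> {0..K} \<Longrightarrow> \<not> 0 < \<alpha> j \<Longrightarrow> z j = 0"
      and sum: "(\<Sum>j\<in>{0..K}. z j) = 1"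
      by blast+
    have "(\<Sum>k\<in>{0..K}. z k) = z 0 + (\<Sum>k\<in>{1..K}. z k)"
      by (simp add: sum.atLeast_Suc_atMost)
    moreover have "0 < z 0" using pos[of 0] by (simp add: \<alpha>_def)
    ultimately have "(\<Sum>k\<in>{1..K}. z k) < 1" using sum by simp
    moreover have "0 \<le> z k" if "k \<in> {1..K}" for k
      using pos[of k] zero[of k] that by (cases "0 < N k") (auto simp: \<alpha>_def)
    moreover have "z k = 0" if "k \<in> {1..K}" "N k = 0" for k
      using zero[of k] that by (simp add: \<alpha>_def)
    ultimately show ?case by blast
  qed
  then show ?thesis unfolding \<alpha>_def .
qed

section \<open>Cell maxima of uniform samples\<close>

(* The Beta(n, 1) density: the law of the maximum of n independent uniform variables. *)
definition beta_n1_density :: "nat \<Rightarrow> real \<Rightarrow> ennreal" where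
  "beta_n1_density n x = ennreal (real n * x ^ (n - 1)) * indicator {0<..1} x"

lemma borel_measurable_beta_n1_density[measurable]: "beta_n1_density n \<in> borel_measurable borel"
  unfolding beta_n1_density_def by measurable

lemma nn_integral_beta_n1_density_atMost:
  assumes n: "1 \<le> n"
  shows "(\<integral>\<^sup>+x. beta_n1_density n x * indicator {..a} x \<partial>lborel) = ennreal (max 0 (min a 1) ^ n)"
proof (cases "0 < a")
  case True
  define b where "b = min a 1"
  have b: "0 < b" "b \<le> 1" using True by (auto simp: b_def)
  have "(\<integral>\<^sup>+x. beta_n1_density n x * indicator {..a} x \<partial>lborel)
      = (\<integral>\<^sup>+x. ennreal (real n * x ^ (n - 1)) * indicator {0..b} x \<partial>lborel)"
    using AE_lborel_singleton[of 0]
    by (intro nn_integral_cong_AE, eventually_elim) (auto simp: beta_n1_density_def indicator_def b_def)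
  also have "\<dots> = ennreal (b ^ n - 0 ^ n)"
  proof (rule nn_integral_FTC_Icc)
    show "DERIV (\<lambda>x. x ^ n) x :> real n * x ^ (n - 1)" for x :: real
      by (rule derivative_eq_intros refl | simp)+
  qed (use b in auto)
  finally show ?thesis using n b by (simp add: b_def)
next
  case False
  then have "beta_n1_density n x * indicator {..a} x = 0" for x
    by (auto simp: beta_n1_density_def indicator_def)
  with False n show ?thesis by (simp add: power_0_left del: mult_eq_0_iff)
qed

lemma prob_space_beta_n1_density:
  assumes "1 \<le> n"
  shows "prob_space (density lborel (beta_n1_density n))"
proof (rule prob_spaceI)
  have "(\<integral>\<^sup>+x. beta_n1_density n x \<partial>lborel) = (\<integral>\<^sup>+x. beta_n1_density n x * indicator {..1} x \<partial>lborel)"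
    by (intro nn_integral_cong) (auto simp: beta_n1_density_def indicator_def)
  then show "emeasure (density lborel (beta_n1_density n)) (space (density lborel (beta_n1_density n))) = 1"
    using nn_integral_beta_n1_density_atMost[OF assms, of 1] by (simp add: emeasure_density)
qed

lemma finite_measure_beta_n1_density: "finite_measure (density lborel (beta_n1_density n))"
proof (cases "n = 0")
  case True
  then show ?thesis by (intro finite_measureI) (simp add: emeasure_density beta_n1_density_def)
next
  case False
  then show ?thesis by (intro prob_space.finite_measure prob_space_beta_n1_density) simp
qed

lemma emeasure_uniform_unit_atMost:
  "emeasure (uniform_measure lborel {0..1 :: real}) {..b} = ennreal (max 0 (min b 1))"
proof -
  have "{0..1} \<inter> {..b} = {0..min b 1 :: real}" by auto
  then show ?thesis
    by (cases "0 \<le> b") (auto simp: emeasure_uniform_measure divide_ennreal_def min.commute)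
qed

definition cell_max :: "nat \<Rightarrow> (nat \<Rightarrow> nat) \<Rightarrow> nat set \<Rightarrow> (nat \<Rightarrow> real) \<Rightarrow> nat \<Rightarrow> real" where
  "cell_max n X P u = (\<lambda>k\<in>P. Max (u ` {i\<in>{1..n}. X i = k}))"

lemma cell_count_pos_iff: "0 < cell_count n X k \<longleftrightarrow> k \<in> X ` {1..n}"
  unfolding cell_count_def by (auto simp: card_gt_0_iff)

lemma measurable_cell_max: "cell_max n X P \<in> measurable (unif_cube n) (PiM P (\<lambda>_. borel))"
  unfolding cell_max_def unif_cube_def
proof (rule measurable_restrict)
  fix k
  have "(\<lambda>u. u i) \<in> borel_measurable (PiM {1..n} (\<lambda>_. uniform_measure lborel {0..1 :: real}))"
    if "i \<in> {i\<in>{1..n}. X i = k}" for i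
    using that measurable_component_singleton[of i "{1..n}" "\<lambda>_. uniform_measure lborel {0..1 :: real}"]
    by (simp cong: measurable_cong_sets)
  then show "(\<lambda>u. Max (u ` {i\<in>{1..n}. X i = k}))
      \<in> borel_measurable (PiM {1..n} (\<lambda>_. uniform_measure lborel {0..1 :: real}))"
    using borel_measurable_Max[of "{i\<in>{1..n}. X i = k}" "\<lambda>i u. u i"] by simp
qed

lemma eX_eq_simplex_above_cell_max:
  "eX K n X u = simplex_above K (X ` {1..n}) (cell_max n X (X ` {1..n}) u)"
proof -
  have "Max (u ` {i\<in>{1..n}. X i = k}) < \<theta> k \<longleftrightarrow> (\<forall>i\<in>{1..n}. X i = k \<longrightarrow> u i < \<theta> k)"
    if "k \<in> X ` {1..n}" for \<theta> :: "nat \<Rightarrow> real" and k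
    using that by (subst Max_less_iff) auto
  then have "(\<forall>k\<in>X ` {1..n}. Max (u ` {i\<in>{1..n}. X i = k}) < \<theta> k) \<longleftrightarrow> (\<forall>i\<in>{1..n}. u i < \<theta> (X i))"
    for \<theta> :: "nat \<Rightarrow> real"
    by auto
  then show ?thesis
    unfolding eX_def simplex_above_def cell_max_def by simp
qed

lemma vimage_cell_max_orthant:
  "cell_max n X (X ` {1..n}) -` PiE (X ` {1..n}) (\<lambda>k. {..a k}) \<inter> space (unif_cube n)
     = PiE {1..n} (\<lambda>i. {..a (X i)})"
proof -
  let ?P = "X ` {1..n}"
  have Max_le: "Max (u ` {i\<in>{1..n}. X i = k}) \<le> a k \<longleftrightarrow> (\<forall>i\<in>{1..n}. X i = k \<longrightarrow> u i \<le> a k)"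
    if "k \<in> ?P" for u k
    using that by (subst Max_le_iff) auto
  show ?thesis
  proof (intro equalityI subsetI)
    fix u assume u: "u \<in> cell_max n X ?P -` PiE ?P (\<lambda>k. {..a k}) \<inter> space (unif_cube n)"
    have "u i \<le> a (X i)" if i: "i \<in> {1..n}" for i
    proof -
      have "X i \<in> ?P" using i by simp
      then have "Max (u ` {j\<in>{1..n}. X j = X i}) \<le> a (X i)"
        using u by (auto simp: cell_max_def PiE_iff)
      with Max_le[OF \<open>X i \<in> ?P\<close>] i show ?thesis by blast
    qed
    with u show "u \<in> PiE {1..n} (\<lambda>i. {..a (X i)})"
      by (auto simp: unif_cube_def space_PiM PiE_iff)
  next
    fix u assume u: "u \<in> PiE {1..n} (\<lambda>i. {..a (X i)})"
    have "Max (u ` {i\<in>{1..n}. X i = k}) \<le> a k" if "k \<in> ?P" for k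
      using u by (subst Max_le[OF that]) (auto simp: PiE_iff)
    with u show "u \<in> cell_max n X ?P -` PiE ?P (\<lambda>k. {..a k}) \<inter> space (unif_cube n)"
      by (auto simp: cell_max_def unif_cube_def space_PiM PiE_iff)
  qed
qed

lemma distr_cell_max:
  fixes n :: nat and X :: "nat \<Rightarrow> nat"
  defines "P \<equiv> X ` {1..n}"
  shows "distr (unif_cube n) (PiM P (\<lambda>_. borel)) (cell_max n X P)
       = density (PiM P (\<lambda>_. lborel)) (\<lambda>w. \<Prod>k\<in>P. beta_n1_density (cell_count n X k) (w k))"
proof -
  define U where "U = uniform_measure lborel {0..1 :: real}"
  define N where "N = cell_count n X"
  have P: "finite P" by (simp add: P_def)
  have N: "1 \<le> N k" if "k \<in> P" for k
    using that cell_count_pos_iff[of n X k] by (simp add: N_def P_def)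
  interpret U: prob_space U unfolding U_def by (rule prob_space_uniform_measure) auto
  interpret UP: product_prob_space "\<lambda>_. U" by standard
  interpret UC: prob_space "unif_cube n"
    unfolding unif_cube_def U_def[symmetric] by (rule prob_space_PiM) (rule U.prob_space_axioms)
  interpret B: product_sigma_finite "\<lambda>k. density lborel (beta_n1_density (N k))"
    unfolding product_sigma_finite_def
    by (simp add: finite_measure_beta_n1_density finite_measure.sigma_finite_measure)
  have "density (PiM P (\<lambda>_. lborel)) (\<lambda>w. \<Prod>k\<in>P. beta_n1_density (N k) (w k))
      = PiM P (\<lambda>k. density lborel (beta_n1_density (N k)))"
    using P N by (intro PiM_density_lborel[symmetric]) (auto intro: prob_space_beta_n1_density)
  moreover have "distr (unif_cube n) (PiM P (\<lambda>_. borel)) (cell_max n X P) = PiM P (\<lambda>k. density lborel (beta_n1_density (N k)))"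
  proof (rule PiM_borel_measure_eqI_atMost[OF P])
    show "finite_measure (distr (unif_cube n) (PiM P (\<lambda>_. borel)) (cell_max n X P))"
      by (intro prob_space.finite_measure UC.prob_space_distr measurable_cell_max)
    fix a :: "nat \<Rightarrow> real"
    have "cell_max n X P -` PiE P (\<lambda>k. {..a k}) \<inter> space (unif_cube n) = PiE {1..n} (\<lambda>i. {..a (X i)})"
      unfolding P_def by (rule vimage_cell_max_orthant)
    then have "emeasure (distr (unif_cube n) (PiM P (\<lambda>_. borel)) (cell_max n X P)) (PiE P (\<lambda>k. {..a k}))
        = emeasure (unif_cube n) (PiE {1..n} (\<lambda>i. {..a (X i)}))"
      using P by (simp add: emeasure_distr measurable_cell_max sets_PiM_I_finite)
    also have "\<dots> = (\<Prod>i\<in>{1..n}. ennreal (max 0 (min (a (X i)) 1)))"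
      unfolding unif_cube_def U_def[symmetric]
      by (subst UP.emeasure_PiM) (simp_all add: U_def emeasure_uniform_unit_atMost)
    also have "\<dots> = (\<Prod>k\<in>P. \<Prod>i\<in>{i\<in>{1..n}. X i = k}. ennreal (max 0 (min (a (X i)) 1)))"
      by (rule prod.group[symmetric]) (auto simp: P_def)
    also have "\<dots> = (\<Prod>k\<in>P. ennreal (max 0 (min (a k) 1) ^ N k))"
      by (intro prod.cong refl) (simp add: N_def cell_count_def flip: ennreal_power)
    also have "\<dots> = (\<Prod>k\<in>P. emeasure (density lborel (beta_n1_density (N k))) {..a k})"
      using N by (intro prod.cong refl) (simp add: emeasure_density nn_integral_beta_n1_density_atMost)
    also have "\<dots> = emeasure (PiM P (\<lambda>k. density lborel (beta_n1_density (N k)))) (PiE P (\<lambda>k. {..a k}))"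
      using P by (intro B.emeasure_PiM[symmetric]) auto
    finally show "emeasure (distr (unif_cube n) (PiM P (\<lambda>_. borel)) (cell_max n X P)) (PiE P (\<lambda>k. {..a k}))
        = emeasure (PiM P (\<lambda>k. density lborel (beta_n1_density (N k)))) (PiE P (\<lambda>k. {..a k}))" .
  qed (simp_all cong: sets_PiM_cong)
  ultimately show ?thesis by (simp add: N_def)
qed

lemma prod_beta_n1_density_indicator:
  assumes K: "1 \<le> K" and P: "P \<subseteq> {1..K}" and N: "\<forall>k\<in>P. 1 \<le> N k"
  shows "(\<Prod>k\<in>P. beta_n1_density (N k) (w k)) * indicator {w. simplex_above K P w \<noteq> {}} w
       = ennreal (\<Prod>k\<in>P. real (N k)) * ennreal (dirichlet_kernel 1 P N w)"
proof (cases "\<forall>k\<in>P. 0 < w k \<and> w k \<le> 1")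
  case True
  have "(\<Prod>k\<in>P. beta_n1_density (N k) (w k)) = (\<Prod>k\<in>P. ennreal (real (N k) * w k ^ (N k - 1)))"
    using True by (intro prod.cong) (auto simp: beta_n1_density_def)
  also have "\<dots> = ennreal (\<Prod>k\<in>P. real (N k) * w k ^ (N k - 1))"
    using True by (intro prod_ennreal) auto
  also have "(\<Prod>k\<in>P. real (N k) * w k ^ (N k - 1)) = (\<Prod>k\<in>P. real (N k)) * (\<Prod>k\<in>P. w k ^ (N k - 1))"
    by (rule prod.distrib)
  finally have "(\<Prod>k\<in>P. beta_n1_density (N k) (w k))
      = ennreal ((\<Prod>k\<in>P. real (N k)) * (\<Prod>k\<in>P. w k ^ (N k - 1)))" .
  moreover have "simplex_above K P w \<noteq> {} \<longleftrightarrow> sum w P < 1"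
    using simplex_above_nonempty_iff[OF K P] True by (auto intro: less_imp_le)
  moreover have "0 \<le> (\<Prod>k\<in>P. w k ^ (N k - 1))" "0 \<le> (\<Prod>k\<in>P. real (N k))"
    using True by (auto intro!: prod_nonneg)
  ultimately show ?thesis
    using True by (auto simp: dirichlet_kernel_def ennreal_mult)
next
  case False
  then obtain k where k: "k \<in> P" "\<not> (0 < w k \<and> w k \<le> 1)" by auto
  have P_fin: "finite P" using P finite_subset by blast
  have "\<exists>k\<in>P. beta_n1_density (N k) (w k) = 0"
    using k by (intro bexI[of _ k]) (auto simp: beta_n1_density_def)
  then have "(\<Prod>k\<in>P. beta_n1_density (N k) (w k)) = 0" by (rule prod_zero[OF P_fin])
  moreover have "dirichlet_kernel 1 P N w = 0"
  proof (cases "(\<forall>k\<in>P. 0 < w k) \<and> sum w P < 1")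
    case True
    then have "w k \<le> sum w P" using k(1) P_fin by (intro member_le_sum) (auto intro: less_imp_le)
    with True k show ?thesis by auto
  qed (auto simp: dirichlet_kernel_def)
  ultimately show ?thesis by simp
qed

lemma uniform_measure_beta_products:
  assumes K: "1 \<le> K" and P: "P \<subseteq> {1..K}" and N: "\<forall>k\<in>P. 1 \<le> N k"
    and prob: "prob_space (density (PiM P (\<lambda>_. lborel)) (\<lambda>w. ennreal (dirichlet_const P N * dirichlet_kernel 1 P N w)))"
  shows "uniform_measure (density (PiM P (\<lambda>_. lborel)) (\<lambda>w. \<Prod>k\<in>P. beta_n1_density (N k) (w k)))
           {w \<in> space (PiM P (\<lambda>_. borel)). simplex_above K P w \<noteq> {}}
       = density (PiM P (\<lambda>_. lborel)) (\<lambda>w. ennreal (dirichlet_const P N * dirichlet_kernel 1 P N w))"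
proof (rule uniform_measure_density_eq[where c = "ennreal ((\<Prod>k\<in>P. real (N k)) / dirichlet_const P N)"])
  have P_fin: "finite P" using P finite_subset by blast
  have c: "0 < (\<Prod>k\<in>P. real (N k)) / dirichlet_const P N"
    using N dirichlet_const_pos[of P N] by (auto intro!: divide_pos_pos prod_pos)
  then show "ennreal ((\<Prod>k\<in>P. real (N k)) / dirichlet_const P N) \<noteq> 0"
    by (metis ennreal_eq_0_iff not_le)
  show "ennreal ((\<Prod>k\<in>P. real (N k)) / dirichlet_const P N) \<noteq> \<infinity>" by simp
  show "(\<lambda>w. \<Prod>k\<in>P. beta_n1_density (N k) (w k)) \<in> borel_measurable (PiM P (\<lambda>_. lborel))"
    using P_fin by measurable
  show "(\<lambda>w. ennreal (dirichlet_const P N * dirichlet_kernel 1 P N w)) \<in> borel_measurable (PiM P (\<lambda>_. lborel))"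
    using borel_measurable_dirichlet_kernel[OF P_fin, of 1] by measurable
  show "{w \<in> space (PiM P (\<lambda>_. borel)). simplex_above K P w \<noteq> {}} \<in> sets (PiM P (\<lambda>_. lborel))"
    using sets_simplex_above_nonempty[OF P_fin] by (simp cong: sets_PiM_cong)
  fix w :: "nat \<Rightarrow> real" assume "w \<in> space (PiM P (\<lambda>_. lborel))"
  then have "indicator {w \<in> space (PiM P (\<lambda>_. borel)). simplex_above K P w \<noteq> {}} w
      = (indicator {w. simplex_above K P w \<noteq> {}} w :: ennreal)"
    by (simp add: space_PiM indicator_def)
  then show "(\<Prod>k\<in>P. beta_n1_density (N k) (w k)) * indicator {w \<in> space (PiM P (\<lambda>_. borel)). simplex_above K P w \<noteq> {}} w
      = ennreal ((\<Prod>k\<in>P. real (N k)) / dirichlet_const P N) * ennreal (dirichlet_const P N * dirichlet_kernel 1 P N w)"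
    using prod_beta_n1_density_indicator[OF K P N, of w] c dirichlet_const_pos[of P N]
      dirichlet_kernel_nonneg[of 1 P N w] prod_nonneg[of P "\<lambda>k. real (N k)"]
    by (simp add: ennreal_mult[symmetric])
qed (rule prob)

section \<open>The laws of the two random sets\<close>

lemma distr_conditioned_eX:
  fixes K n :: nat and X :: "nat \<Rightarrow> nat"
  assumes K: "1 \<le> K" and X: "\<forall>i\<in>{1..n}. X i \<in> {1..K}"
  defines "N \<equiv> cell_count n X"
  defines "P \<equiv> {k\<in>{1..K}. 0 < N k}"
  shows "distr (uniform_measure (unif_cube n) {u \<in> space (unif_cube n). eX K n X u \<noteq> {}}) effros (eX K n X)
       = distr (density (PiM P (\<lambda>_. lborel)) (\<lambda>w. ennreal (dirichlet_const P N * dirichlet_kernel 1 P N w)))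
           effros (simplex_above K P)"
proof -
  let ?E = "{w \<in> space (PiM P (\<lambda>_. borel)). simplex_above K P w \<noteq> {}}"
  let ?U = "uniform_measure (unif_cube n) {u \<in> space (unif_cube n). eX K n X u \<noteq> {}}"
  have P: "P = X ` {1..n}" "P \<subseteq> {1..K}" "finite P"
    using X by (auto simp: P_def N_def cell_count_pos_iff)
  have N: "\<forall>k\<in>P. 1 \<le> N k" by (simp add: P_def)
  have eX: "eX K n X = (\<lambda>u. simplex_above K P (cell_max n X P u))"
    unfolding P(1) by (rule ext) (rule eX_eq_simplex_above_cell_max)
  have "{u \<in> space (unif_cube n). eX K n X u \<noteq> {}} = {u \<in> space (unif_cube n). cell_max n X P u \<in> ?E}"
    using measurable_space[OF measurable_cell_max] unfolding eX by blast
  then have "distr ?U (PiM P (\<lambda>_. borel)) (cell_max n X P)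
      = uniform_measure (distr (unif_cube n) (PiM P (\<lambda>_. borel)) (cell_max n X P)) ?E"
    using distr_uniform_measure[OF measurable_cell_max sets_simplex_above_nonempty[OF P(3)]] by simp
  also have "distr (unif_cube n) (PiM P (\<lambda>_. borel)) (cell_max n X P)
      = density (PiM P (\<lambda>_. lborel)) (\<lambda>w. \<Prod>k\<in>P. beta_n1_density (N k) (w k))"
    unfolding P(1) N_def by (rule distr_cell_max)
  also have "uniform_measure (density (PiM P (\<lambda>_. lborel)) (\<lambda>w. \<Prod>k\<in>P. beta_n1_density (N k) (w k))) ?E
      = density (PiM P (\<lambda>_. lborel)) (\<lambda>w. ennreal (dirichlet_const P N * dirichlet_kernel 1 P N w))"
    using prob_space_dirichlet_marginal[of K N] unfolding P_def[symmetric]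
    by (rule uniform_measure_beta_products[OF K P(2) N])
  finally have cond: "distr ?U (PiM P (\<lambda>_. borel)) (cell_max n X P)
      = density (PiM P (\<lambda>_. lborel)) (\<lambda>w. ennreal (dirichlet_const P N * dirichlet_kernel 1 P N w))" .
  have cell_max_meas: "cell_max n X P \<in> measurable ?U (PiM P (\<lambda>_. borel))"
    using measurable_cell_max by (simp cong: measurable_cong_sets)
  have "distr ?U effros (eX K n X) = distr ?U effros (simplex_above K P \<circ> cell_max n X P)"
    using eX by (intro arg_cong[where f = "distr ?U effros"]) (simp add: comp_def)
  also have "\<dots> = distr (distr ?U (PiM P (\<lambda>_. borel)) (cell_max n X P)) effros (simplex_above K P)"
    by (rule distr_distr[OF measurable_simplex_above[OF P(3)] cell_max_meas, symmetric])
  finally show ?thesis unfolding cond .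
qed

lemma distr_dirichlet_eN:
  fixes K :: nat and N :: "nat \<Rightarrow> nat"
  assumes K: "1 \<le> K"
  defines "P \<equiv> {k\<in>{1..K}. 0 < N k}"
  shows "distr (dirichlet {0..K} (\<lambda>j. if j = 0 then 1 else real (N j))) effros (eN K)
       = distr (density (PiM P (\<lambda>_. lborel)) (\<lambda>w. ennreal (dirichlet_const P N * dirichlet_kernel 1 P N w)))
           effros (simplex_above K P)"
proof -
  let ?D = "dirichlet {0..K} (\<lambda>j. if j = 0 then 1 else real (N j))"
  have P: "P \<subseteq> {1..K}" "finite P" by (auto simp: P_def)
  have restr: "(\<lambda>z. restrict z P) \<in> measurable ?D (PiM P (\<lambda>_. borel))"
    unfolding measurable_cong_sets[OF sets_dirichlet refl] using P(1)
    by (intro measurable_restrict_subset) auto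
  have "AE z in ?D. (\<forall>k\<in>{1..K}. 0 \<le> z k) \<and> (\<Sum>k\<in>{1..K}. z k) < 1 \<and> (\<forall>k\<in>{1..K} - P. z k = 0)"
    using AE_dirichlet_cells[of K N] by eventually_elim (auto simp: P_def)
  then have "AE z in ?D. \<forall>G. open G \<longrightarrow> (eN K z \<inter> G \<noteq> {} \<longleftrightarrow> simplex_above K P (restrict z P) \<inter> G \<noteq> {})"
    by eventually_elim (use eN_hits_iff_simplex_above[OF K P(1)] in blast)
  then have "distr ?D effros (eN K) = distr ?D effros (\<lambda>z. simplex_above K P (restrict z P))"
    using measurable_eN[OF K, of "{0..K}"] measurable_compose[OF restr measurable_simplex_above[OF P(2)]]
    by (intro distr_effros_AE_cong) (simp_all cong: measurable_cong_sets)
  also have "\<dots> = distr (distr ?D (PiM P (\<lambda>_. borel)) (\<lambda>z. restrict z P)) effros (simplex_above K P)"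
    using distr_distr[OF measurable_simplex_above[OF P(2)] restr] by (simp add: comp_def)
  finally show ?thesis
    unfolding P_def distr_dirichlet_restrict .
qed

theorem theorem1:
  fixes K n :: nat and X :: "nat \<Rightarrow> nat"
  assumes "K \<ge> 2"
    and "\<forall>i\<in>{1..n}. X i \<in> {1..K}"
  shows "distr (uniform_measure (unif_cube n) {u \<in> space (unif_cube n). eX K n X u \<noteq> {}})
               effros (eX K n X)
       = distr (dirichlet {0..K} (\<lambda>j. if j = 0 then 1 else real (cell_count n X j)))
               effros (eN K)"
proof -
  have K: "1 \<le> K" using assms(1) by simp
  show ?thesis
    unfolding distr_conditioned_eX[OF K assms(2)] distr_dirichlet_eN[OF K] ..
qed

end
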